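(* Let $\rho$ be a state of a finite-dimensional system with Hamiltonian $H$, and let $\beta>0$. Then the thermal polytope of the maximally active state $\hat\rho$ contains the thermal polytope of $U\rho U^\dagger$ for every unitary $U$.
   Context: Write $H=\sum_{i=0}^{d-1}E_i|i\rangle\langle i|$ with $E_0\le\dots\le E_{d-1}$. The maximally active state of $\rho$ is $\hat\rho=\sum_i\lambda_i^\uparrow|i\rangle\langle i|$, where $\lambda^\uparrow_0\le\dots\le\lambda^\uparrow_{d-1}$ are the eigenvalues of $\rho$ in ascending order. A dephasing thermalization is a quantum channel $\Lambda$ with $\Lambda(\tau)=\tau$, where $\tau=e^{-\beta H}/\mathrm{tr}[e^{-\beta H}]$, and with $\langle E|\Lambda(\sigma)|E'\rangle=0$ for all $\sigma$ whenever $|E\rangle,|E'\rangle$ are eigenstates of $H$ with distinct energies. The thermal polytope of a state $\sigma$ is the set of population vectors $(\langle i|\Lambda(\sigma)|i\rangle)_{i}$ (in the energy eigenbasis, chosen within degenerate eigenspaces to diagonalize the relevant state) over all dephasing thermalizations $\Lambda$. *)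

theory Defs
  imports Complex_Main "Jordan_Normal_Form.Char_Poly"
begin

definition adj :: "complex mat \<Rightarrow> complex mat" where
  "adj A = mat (dim_col A) (dim_row A) (\<lambda>(i,j). cnj (A $$ (j,i)))"

definition mtrace :: "complex mat \<Rightarrow> complex" where
  "mtrace A = (\<Sum>i<dim_row A. A $$ (i,i))"

definition psd :: "nat \<Rightarrow> complex mat \<Rightarrow> bool" where
  "psd n A \<longleftrightarrow> A \<in> carrier_mat n n \<and> adj A = A \<and>
     (\<forall>v \<in> carrier_vec n. Im (conjugate v \<bullet> (A *\<^sub>v v)) = 0 \<and> Re (conjugate v \<bullet> (A *\<^sub>v v)) \<ge> 0)"

definition is_state :: "nat \<Rightarrow> complex mat \<Rightarrow> bool" where
  "is_state d \<rho> \<longleftrightarrow> psd d \<rho> \<and> mtrace \<rho> = 1"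

definition unitary_mat :: "nat \<Rightarrow> complex mat \<Rightarrow> bool" where
  "unitary_mat d U \<longleftrightarrow> U \<in> carrier_mat d d \<and> U * adj U = 1\<^sub>m d \<and> adj U * U = 1\<^sub>m d"

definition diag_of :: "nat \<Rightarrow> (nat \<Rightarrow> complex) \<Rightarrow> complex mat" where
  "diag_of d f = mat d d (\<lambda>(i,j). if i = j then f i else 0)"

definition hamiltonian :: "nat \<Rightarrow> (nat \<Rightarrow> real) \<Rightarrow> complex mat" where
  "hamiltonian d E = diag_of d (\<lambda>i. complex_of_real (E i))"

(* Gibbs state tau = exp(-beta H) / tr exp(-beta H) *)
definition gibbs :: "nat \<Rightarrow> (nat \<Rightarrow> real) \<Rightarrow> real \<Rightarrow> complex mat" where
  "gibbs d E \<beta> = diag_of d (\<lambda>i. complex_of_real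
      (exp (- \<beta> * E i) / (\<Sum>k<d. exp (- \<beta> * E k))))"

(* ampliation id_n \<otimes> \<Lambda>, acting on (n*d)x(n*d) matrices viewed as n x n blocks of d x d
   matrices (index a*d+i for C^n \<otimes> C^d) *)
definition ampliation :: "nat \<Rightarrow> nat \<Rightarrow> (complex mat \<Rightarrow> complex mat) \<Rightarrow> complex mat \<Rightarrow> complex mat" where
  "ampliation d n \<Lambda> X = mat (n*d) (n*d) (\<lambda>(r,c).
      \<Lambda> (mat d d (\<lambda>(i,j). X $$ ((r div d) * d + i, (c div d) * d + j))) $$ (r mod d, c mod d))"

(* quantum channel on d x d matrices: linear, completely positive, trace preserving *)
definition quantum_channel :: "nat \<Rightarrow> (complex mat \<Rightarrow> complex mat) \<Rightarrow> bool" where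
  "quantum_channel d \<Lambda> \<longleftrightarrow>
     (\<forall>X \<in> carrier_mat d d. \<Lambda> X \<in> carrier_mat d d) \<and>
     (\<forall>X \<in> carrier_mat d d. \<forall>Y \<in> carrier_mat d d. \<Lambda> (X + Y) = \<Lambda> X + \<Lambda> Y) \<and>
     (\<forall>X \<in> carrier_mat d d. \<forall>c. \<Lambda> (c \<cdot>\<^sub>m X) = c \<cdot>\<^sub>m \<Lambda> X) \<and>
     (\<forall>X \<in> carrier_mat d d. mtrace (\<Lambda> X) = mtrace X) \<and>
     (\<forall>n X. psd (n*d) X \<longrightarrow> psd (n*d) (ampliation d n \<Lambda> X))"

(* dephasing thermalization: channel fixing the Gibbs state and killing coherences between
   distinct energies (H is diagonal in the computational basis) *)
definition dephasing_thermalization ::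
  "nat \<Rightarrow> (nat \<Rightarrow> real) \<Rightarrow> real \<Rightarrow> (complex mat \<Rightarrow> complex mat) \<Rightarrow> bool" where
  "dephasing_thermalization d E \<beta> \<Lambda> \<longleftrightarrow>
     quantum_channel d \<Lambda> \<and> \<Lambda> (gibbs d E \<beta>) = gibbs d E \<beta> \<and>
     (\<forall>\<sigma> \<in> carrier_mat d d. \<forall>i<d. \<forall>j<d. E i \<noteq> E j \<longrightarrow> \<Lambda> \<sigma> $$ (i,j) = 0)"

(* unitary acting within the energy eigenspaces of H (a change of energy eigenbasis) *)
definition energy_basis_change :: "nat \<Rightarrow> (nat \<Rightarrow> real) \<Rightarrow> complex mat \<Rightarrow> bool" where
  "energy_basis_change d E W \<longleftrightarrow> unitary_mat d W \<and>
     (\<forall>i<d. \<forall>j<d. E i \<noteq> E j \<longrightarrow> W $$ (i,j) = 0)"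

(* thermal polytope of \<sigma>: population vectors of \<Lambda>(\<sigma>), read off in an energy eigenbasis
   (chosen inside degenerate eigenspaces) that diagonalizes \<Lambda>(\<sigma>) *)
definition thermal_polytope :: "nat \<Rightarrow> (nat \<Rightarrow> real) \<Rightarrow> real \<Rightarrow> complex mat \<Rightarrow> real vec set" where
  "thermal_polytope d E \<beta> \<sigma> = {p. \<exists>\<Lambda> W. dephasing_thermalization d E \<beta> \<Lambda> \<and>
       energy_basis_change d E W \<and> diagonal_mat (adj W * \<Lambda> \<sigma> * W) \<and>
       p = vec d (\<lambda>i. Re ((adj W * \<Lambda> \<sigma> * W) $$ (i,i)))}"

definition ascending_eigenvalues :: "complex mat \<Rightarrow> real list \<Rightarrow> bool" where
  "ascending_eigenvalues \<rho> lam \<longleftrightarrow> length lam = dim_row \<rho> \<and> sorted lam \<and>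
     char_poly \<rho> = (\<Prod>a \<leftarrow> lam. [:- complex_of_real a, 1:])"

definition maximally_active :: "nat \<Rightarrow> real list \<Rightarrow> complex mat" where
  "maximally_active d lam = diag_of d (\<lambda>i. complex_of_real (lam ! i))"

end

theory Submission
  imports Defs "Jordan_Normal_Form.Schur_Decomposition"
begin

(* Let p be the populations of \<Lambda>(U \<rho> U\<^sup>\<dagger>) in an energy basis W, and write
   U \<rho> U\<^sup>\<dagger> = Q diag(\<lambda>) Q\<^sup>\<dagger>. Reading \<Lambda> between the columns of Q (resp. the energy
   eigenvectors) and the basis W gives column-stochastic matrices A (resp. B) with equal row
   sums, p = A \<lambda>, and B fixes the Gibbs weights \<tau>. Rearrangement then shows that for every set
   S of levels, p(S) is at most the largest value of \<Sum>i (\<lambda>i/\<tau>i) ci over 0 \<le> c \<le> \<tau> with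
   total mass \<tau>(S). This condition yields a transport plan X \<ge> 0 with all row and column sums
   \<tau> and \<Sum>i (\<lambda>i/\<tau>i) Xki = pk: the level k of largest pk/\<tau>k is served, by the intermediate
   value theorem, by a window of length \<tau>k in the staircase of the masses \<tau>i, and the rest
   follows by induction. Then G = X/\<tau> is a Gibbs-preserving stochastic matrix with G \<lambda> = p,
   and as a classical channel acting on the diagonal state diag(\<lambda>) it produces exactly p. *)

section \<open>Windows in a staircase of masses\<close>

definition prefix_sum :: "(nat \<Rightarrow> real) \<Rightarrow> nat \<Rightarrow> real" where
  "prefix_sum t i = (\<Sum>j<i. t j)"

(* Lay the masses t 0, t 1, ... end to end on the real line, so that mass i fills the bin
   from prefix_sum t i to prefix_sum t (Suc i); window_mass t x y i is the length of the part
   of that bin inside the window [x, y]. *)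
definition window_mass :: "(nat \<Rightarrow> real) \<Rightarrow> real \<Rightarrow> real \<Rightarrow> nat \<Rightarrow> real" where
  "window_mass t x y i =
     max x (min y (prefix_sum t (Suc i))) - max x (min y (prefix_sum t i))"

lemma prefix_sum_Suc: "prefix_sum t (Suc i) = prefix_sum t i + t i"
  by (simp add: prefix_sum_def)

lemma prefix_sum_mono:
  assumes "\<forall>i<n. 0 \<le> t i" "i \<le> j" "j \<le> n"
  shows "prefix_sum t i \<le> prefix_sum t j"
proof -
  have "prefix_sum t j = prefix_sum t i + (\<Sum>k\<in>{i..<j}. t k)"
    unfolding prefix_sum_def using assms(2)
    by (metis sum.atLeastLessThan_concat lessThan_atLeast0 zero_le)
  moreover have "(\<Sum>k\<in>{i..<j}. t k) \<ge> 0"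
    using assms by (intro sum_nonneg) auto
  ultimately show ?thesis by simp
qed

lemma prefix_sum_nonneg: "\<forall>i<n. 0 \<le> t i \<Longrightarrow> i \<le> n \<Longrightarrow> 0 \<le> prefix_sum t i"
  using prefix_sum_mono[of n t 0 i] by (simp add: prefix_sum_def)

lemma prefix_sum_less_imp_le:
  assumes "\<forall>i<n. 0 \<le> t i" "i \<le> n" "prefix_sum t i < prefix_sum t (Suc j)"
  shows "i \<le> j"
  using prefix_sum_mono[of n t "Suc j" i] assms by fastforce

lemma window_mass_nonneg: "x \<le> y \<Longrightarrow> 0 \<le> t i \<Longrightarrow> 0 \<le> window_mass t x y i"
  unfolding window_mass_def prefix_sum_Suc by (auto simp: max_def min_def)

lemma window_mass_le: "x \<le> y \<Longrightarrow> 0 \<le> t i \<Longrightarrow> window_mass t x y i \<le> t i"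
  unfolding window_mass_def prefix_sum_Suc by (auto simp: max_def min_def)

lemma window_mass_split:
  "x \<le> y \<Longrightarrow> y \<le> z \<Longrightarrow> window_mass t x z i = window_mass t x y i + window_mass t y z i"
  unfolding window_mass_def by (auto simp: max_def min_def)

lemma window_mass_empty: "window_mass t x x i = 0"
  unfolding window_mass_def by (auto simp: max_def min_def)

lemma sum_window_mass:
  assumes "\<forall>i<n. 0 \<le> t i" "0 \<le> x" "x \<le> y" "y \<le> prefix_sum t n"
  shows "(\<Sum>i<n. window_mass t x y i) = y - x"
proof -
  have "(\<Sum>i<n. window_mass t x y i)
      = max x (min y (prefix_sum t n)) - max x (min y (prefix_sum t 0))"
    unfolding window_mass_def by (rule sum_lessThan_telescope)
  then show ?thesis using assms by (simp add: prefix_sum_def)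
qed

lemma window_mass_whole:
  assumes "\<forall>i<n. 0 \<le> t i" "i < n"
  shows "window_mass t 0 (prefix_sum t n) i = t i"
  using prefix_sum_nonneg[of n t i] prefix_sum_mono[of n t "Suc i" n] assms
  unfolding window_mass_def prefix_sum_Suc by (auto simp: max_def min_def)

lemma window_mass_pos_lower: "x \<le> y \<Longrightarrow> 0 < window_mass t x y i \<Longrightarrow> x < prefix_sum t (Suc i)"
  unfolding window_mass_def by (auto simp: max_def min_def split: if_splits)

lemma window_mass_pos_upper: "x \<le> y \<Longrightarrow> 0 < window_mass t x y i \<Longrightarrow> prefix_sum t i < y"
  unfolding window_mass_def by (auto simp: max_def min_def split: if_splits)

lemma window_mass_top_less:
  assumes "\<forall>i<n. 0 \<le> t i" "i < n" "x \<le> prefix_sum t n"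
    and "window_mass t x (prefix_sum t n) i < t i"
  shows "prefix_sum t i < x"
  using prefix_sum_mono[of n t "Suc i" n] assms
  unfolding window_mass_def prefix_sum_Suc by (auto simp: max_def min_def split: if_splits)

lemma top_window_threshold:
  fixes r :: "nat \<Rightarrow> 'a :: linorder"
  assumes t: "\<forall>i<n. 0 \<le> t i" and r: "\<forall>i j. i \<le> j \<and> j < n \<longrightarrow> r i \<le> r j"
    and x: "0 \<le> x" "x < prefix_sum t n"
  obtains i0 where "i0 < n"
    "\<And>i. i < n \<Longrightarrow> 0 < window_mass t x (prefix_sum t n) i \<Longrightarrow> r i0 \<le> r i"
    "\<And>i. i < n \<Longrightarrow> prefix_sum t i < x \<Longrightarrow> r i \<le> r i0"
proof -
  define T where "T = {i. i < n \<and> 0 < window_mass t x (prefix_sum t n) i}"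
  have "T \<noteq> {}"
  proof
    assume "T = {}"
    then have "\<forall>i<n. window_mass t x (prefix_sum t n) i = 0"
      using window_mass_nonneg t x unfolding T_def by (metis (mono_tags) empty_Collect_eq less_eq_real_def)
    then show False using sum_window_mass[OF t, of x "prefix_sum t n"] x by simp
  qed
  then obtain i0 where "is_arg_min r (\<lambda>i. i \<in> T) i0"
    using ex_is_arg_min_if_finite[of T r] unfolding T_def by auto
  then have i0: "i0 \<in> T" "\<And>i. i \<in> T \<Longrightarrow> r i0 \<le> r i"
    unfolding is_arg_min_linorder by auto
  have "x < prefix_sum t (Suc i0)"
    using window_mass_pos_lower[of x "prefix_sum t n" t i0] i0(1) x unfolding T_def by auto
  then have "r i \<le> r i0" if "i < n" "prefix_sum t i < x" for i
    using prefix_sum_less_imp_le[OF t, of i i0] r i0(1) that unfolding T_def by fastforce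
  with i0 that show ?thesis unfolding T_def by auto
qed

lemma weighted_sum_le_top_window_eq:
  assumes t: "\<forall>i<n. 0 \<le> t i"
    and r: "\<forall>i j. i \<le> j \<and> j < n \<longrightarrow> r i \<le> r j"
    and m: "0 \<le> m" "m \<le> prefix_sum t n"
    and c: "\<forall>i<n. 0 \<le> c i \<and> c i \<le> t i"
    and cs: "(\<Sum>i<n. c i) = m"
  shows "(\<Sum>i<n. r i * c i)
    \<le> (\<Sum>i<n. r i * window_mass t (prefix_sum t n - m) (prefix_sum t n) i)"
proof (cases "m = 0")
  case True
  then have "\<forall>i<n. c i = 0" using cs c
    by (metis (no_types, lifting) finite_lessThan lessThan_iff sum_nonneg_eq_0_iff)
  then show ?thesis using True by (simp add: window_mass_empty)
next
  case False
  define M where "M = prefix_sum t n"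
  define w where "w = window_mass t (M - m) M"
  obtain i0 where i0: "i0 < n" "\<And>i. i < n \<Longrightarrow> 0 < w i \<Longrightarrow> r i0 \<le> r i"
    "\<And>i. i < n \<Longrightarrow> prefix_sum t i < M - m \<Longrightarrow> r i \<le> r i0"
    using top_window_threshold[OF t r, of "M - m"] m False unfolding M_def w_def by auto
  have w0: "0 \<le> w i" if "i < n" for i
    using window_mass_nonneg t m that unfolding w_def by auto
  have sw: "(\<Sum>i<n. w i) = m"
    using sum_window_mass[OF t, of "M - m" M] m unfolding w_def M_def by auto
  have "0 \<le> (r i - r i0) * (w i - c i)" if i: "i < n" for i
  proof (cases "c i \<le> w i")
    case True
    show ?thesis
    proof (cases "w i = 0")
      case True
      moreover have "c i = 0" using True \<open>c i \<le> w i\<close> c i by (simp add: order_antisym)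
      ultimately show ?thesis by simp
    next
      case False then show ?thesis using i0(2)[OF i] w0[OF i] \<open>c i \<le> w i\<close> by simp
    qed
  next
    case False
    then have "prefix_sum t i < M - m"
      using window_mass_top_less[OF t i] c i m unfolding w_def M_def by force
    then show ?thesis using i0(3)[OF i] False by (simp add: mult_nonpos_nonpos)
  qed
  then have "0 \<le> (\<Sum>i<n. (r i - r i0) * (w i - c i))" by (intro sum_nonneg) auto
  also have "\<dots> = (\<Sum>i<n. r i * w i - r i * c i - r i0 * w i + r i0 * c i)"
    by (intro sum.cong) (auto simp: algebra_simps)
  also have "\<dots> = (\<Sum>i<n. r i * w i) - (\<Sum>i<n. r i * c i) - r i0 * ((\<Sum>i<n. w i) - (\<Sum>i<n. c i))"
    by (simp add: sum.distrib sum_subtractf sum_distrib_left[symmetric] right_diff_distrib)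
  finally show ?thesis using sw cs unfolding w_def M_def by simp
qed

lemma weighted_sum_le_top_window:
  assumes t: "\<forall>i<n. 0 \<le> t i"
    and r: "\<forall>i j. i \<le> j \<and> j < n \<longrightarrow> r i \<le> r j" and r0: "\<forall>i<n. 0 \<le> r i"
    and m: "m \<le> prefix_sum t n"
    and c: "\<forall>i<n. 0 \<le> c i \<and> c i \<le> t i"
    and cs: "(\<Sum>i<n. c i) \<le> m"
  shows "(\<Sum>i<n. r i * c i)
    \<le> (\<Sum>i<n. r i * window_mass t (prefix_sum t n - m) (prefix_sum t n) i)"
proof -
  define M where "M = prefix_sum t n"
  define m' where "m' = (\<Sum>i<n. c i)"
  have m'0: "0 \<le> m'" unfolding m'_def using c by (intro sum_nonneg) auto
  have "(\<Sum>i<n. r i * c i) \<le> (\<Sum>i<n. r i * window_mass t (M - m') M i)"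
    unfolding M_def by (rule weighted_sum_le_top_window_eq[OF t r m'0 _ c]) (use cs m in \<open>auto simp: m'_def\<close>)
  also have "\<dots> \<le> (\<Sum>i<n. r i * window_mass t (M - m) M i)"
  proof (intro sum_mono mult_left_mono)
    fix i assume i: "i \<in> {..<n}"
    have "window_mass t (M - m) M i = window_mass t (M - m) (M - m') i + window_mass t (M - m') M i"
      using cs m'0 by (intro window_mass_split) (auto simp: m'_def)
    moreover have "0 \<le> window_mass t (M - m) (M - m') i"
      using cs t i by (intro window_mass_nonneg) (auto simp: m'_def)
    ultimately show "window_mass t (M - m') M i \<le> window_mass t (M - m) M i" by simp
    show "0 \<le> r i" using r0 i by auto
  qed
  finally show ?thesis unfolding M_def .
qed

lemma weighted_sum_le_top_unit_window:
  fixes r a :: "nat \<Rightarrow> real"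
  assumes r: "\<forall>i j. i \<le> j \<and> j < d \<longrightarrow> r i \<le> r j" and a: "\<forall>j<d. 0 \<le> a j \<and> a j \<le> 1"
  shows "(\<Sum>j<d. r j * a j)
    \<le> (\<Sum>j<d. r j * window_mass (\<lambda>_. 1) (real d - (\<Sum>j<d. a j)) (real d) j)"
proof -
  have "0 \<le> (\<Sum>j<d. a j)" "(\<Sum>j<d. a j) \<le> prefix_sum (\<lambda>_. 1) d"
    using sum_mono[of "{..<d}" a "\<lambda>_. 1"] a unfolding prefix_sum_def by (auto intro: sum_nonneg)
  from weighted_sum_le_top_window_eq[of d "\<lambda>_. 1", OF _ r this a refl] show ?thesis
    unfolding prefix_sum_def by simp
qed

lemma window_average_le_top_window:
  assumes t: "\<forall>i<n. 0 \<le> t i"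
    and r: "\<forall>i j. i \<le> j \<and> j < n \<longrightarrow> r i \<le> r j"
    and ab: "0 \<le> a" "a \<le> b" "b \<le> x" "x \<le> prefix_sum t n"
  shows "(\<Sum>i<n. r i * window_mass t a b i) * (prefix_sum t n - x)
    \<le> (\<Sum>i<n. r i * window_mass t x (prefix_sum t n) i) * (b - a)"
proof (cases "x = prefix_sum t n")
  case True then show ?thesis by (simp add: window_mass_empty)
next
  case False
  define M where "M = prefix_sum t n"
  obtain i0 where i0: "i0 < n" "\<And>i. i < n \<Longrightarrow> 0 < window_mass t x M i \<Longrightarrow> r i0 \<le> r i"
    "\<And>i. i < n \<Longrightarrow> prefix_sum t i < x \<Longrightarrow> r i \<le> r i0"
    using top_window_threshold[OF t r, of x] False ab unfolding M_def by auto
  have "(\<Sum>i<n. r i * window_mass t a b i) \<le> (\<Sum>i<n. r i0 * window_mass t a b i)"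
  proof (intro sum_mono)
    fix i assume i: "i \<in> {..<n}"
    show "r i * window_mass t a b i \<le> r i0 * window_mass t a b i"
    proof (cases "0 < window_mass t a b i")
      case True
      then have "prefix_sum t i < x" using window_mass_pos_upper ab by fastforce
      then show ?thesis using i0(3) i True by (simp add: mult_right_mono)
    next
      case False
      then have "window_mass t a b i = 0"
        using window_mass_nonneg[of a b t i] ab t i by simp
      then show ?thesis by simp
    qed
  qed
  also have "\<dots> = r i0 * (b - a)"
    using sum_window_mass[OF t, of a b] ab by (simp add: sum_distrib_left[symmetric])
  finally have low: "(\<Sum>i<n. r i * window_mass t a b i) \<le> r i0 * (b - a)" .
  have "r i0 * (M - x) = (\<Sum>i<n. r i0 * window_mass t x M i)"
    using sum_window_mass[OF t, of x M] ab unfolding M_def by (simp add: sum_distrib_left[symmetric])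
  also have "\<dots> \<le> (\<Sum>i<n. r i * window_mass t x M i)"
  proof (intro sum_mono)
    fix i assume i: "i \<in> {..<n}"
    show "r i0 * window_mass t x M i \<le> r i * window_mass t x M i"
      using i0(2)[of i] window_mass_nonneg[of x M t i] t i ab
      by (cases "0 < window_mass t x M i") (auto simp: M_def mult_right_mono)
  qed
  finally have high: "r i0 * (M - x) \<le> (\<Sum>i<n. r i * window_mass t x M i)" .
  have "(\<Sum>i<n. r i * window_mass t a b i) * (M - x) \<le> r i0 * (b - a) * (M - x)"
    using low ab unfolding M_def by (intro mult_right_mono) auto
  also have "\<dots> \<le> (\<Sum>i<n. r i * window_mass t x M i) * (b - a)"
    using mult_right_mono[OF high, of "b - a"] ab by (simp add: algebra_simps)
  finally show ?thesis unfolding M_def .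
qed

section \<open>Transport plans\<close>

(* Transport of the masses t i (of value r i per unit) into sinks k \<in> K of capacity \<tau> k, sink k
   having to receive total value p k. The condition says that no set S of sinks demands more
   value than the best choice of total mass \<tau>(S) from t can deliver. *)
definition transport_condition ::
  "nat \<Rightarrow> (nat \<Rightarrow> real) \<Rightarrow> (nat \<Rightarrow> real) \<Rightarrow> nat set \<Rightarrow> (nat \<Rightarrow> real) \<Rightarrow> (nat \<Rightarrow> real) \<Rightarrow> bool"
where
  "transport_condition n r t K \<tau> p \<longleftrightarrow> (\<forall>S\<subseteq>K. \<exists>c. (\<forall>i<n. 0 \<le> c i \<and> c i \<le> t i) \<and>
      (\<Sum>i<n. c i) \<le> (\<Sum>k\<in>S. \<tau> k) \<and> (\<Sum>k\<in>S. p k) \<le> (\<Sum>i<n. r i * c i))"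

lemma transport_conditionI:
  assumes "\<And>S. S \<subseteq> K \<Longrightarrow> \<exists>c. (\<forall>i<n. 0 \<le> c i \<and> c i \<le> t i) \<and>
      (\<Sum>i<n. c i) \<le> (\<Sum>k\<in>S. \<tau> k) \<and> (\<Sum>k\<in>S. p k) \<le> (\<Sum>i<n. r i * c i)"
  shows "transport_condition n r t K \<tau> p"
  using assms unfolding transport_condition_def by blast

lemma transport_condition_top_window:
  assumes t: "\<forall>i<n. 0 \<le> t i"
    and r: "\<forall>i j. i \<le> j \<and> j < n \<longrightarrow> r i \<le> r j" and r0: "\<forall>i<n. 0 \<le> r i"
    and cond: "transport_condition n r t K \<tau> p"
    and S: "S \<subseteq> K" "(\<Sum>k\<in>S. \<tau> k) \<le> prefix_sum t n"
  shows "(\<Sum>k\<in>S. p k)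
    \<le> (\<Sum>i<n. r i * window_mass t (prefix_sum t n - (\<Sum>k\<in>S. \<tau> k)) (prefix_sum t n) i)"
proof -
  obtain c where c: "\<forall>i<n. 0 \<le> c i \<and> c i \<le> t i" "(\<Sum>i<n. c i) \<le> (\<Sum>k\<in>S. \<tau> k)"
    "(\<Sum>k\<in>S. p k) \<le> (\<Sum>i<n. r i * c i)"
    using cond S unfolding transport_condition_def by blast
  show ?thesis
    using c(3) weighted_sum_le_top_window[OF t r r0 S(2) c(1,2)] by linarith
qed

text \<open>By the condition for {ks} and for the other sinks, the top window of length \<tau> ks
  delivers at least p ks and the bottom one at most p ks, so some window in between delivers
  exactly p ks.\<close>

lemma transport_window_exists:
  assumes t: "\<forall>i<n. 0 \<le> t i"
    and r: "\<forall>i j. i \<le> j \<and> j < n \<longrightarrow> r i \<le> r j" and r0: "\<forall>i<n. 0 \<le> r i"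
    and K: "finite K" "ks \<in> K" and tau: "\<forall>k\<in>K. 0 < \<tau> k"
    and st: "(\<Sum>i<n. t i) = (\<Sum>k\<in>K. \<tau> k)"
    and srt: "(\<Sum>i<n. r i * t i) = (\<Sum>k\<in>K. p k)"
    and cond: "transport_condition n r t K \<tau> p"
  obtains a where "0 \<le> a" "a + \<tau> ks \<le> prefix_sum t n"
    "(\<Sum>i<n. r i * window_mass t a (a + \<tau> ks) i) = p ks"
proof -
  define M where "M = prefix_sum t n"
  define K' where "K' = K - {ks}"
  define F where "F x y = (\<Sum>i<n. r i * window_mass t x y i)" for x y
  have sum_K: "(\<Sum>k\<in>K. f k) = f ks + (\<Sum>k\<in>K'. f k)" for f :: "nat \<Rightarrow> real"
    unfolding K'_def using K by (simp add: sum.remove)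
  have "0 \<le> (\<Sum>k\<in>K'. \<tau> k)" using tau unfolding K'_def by (intro sum_nonneg) auto
  moreover have M: "M = \<tau> ks + (\<Sum>k\<in>K'. \<tau> k)"
    using st sum_K[of \<tau>] unfolding M_def prefix_sum_def by simp
  ultimately have \<tau>M: "\<tau> ks \<le> M" by simp
  have up: "p ks \<le> F (M - \<tau> ks) M"
    using transport_condition_top_window[OF t r r0 cond, of "{ks}"] K \<tau>M
    unfolding F_def M_def by simp
  have "(\<Sum>k\<in>K'. p k) \<le> F (M - (\<Sum>k\<in>K'. \<tau> k)) M"
    using transport_condition_top_window[OF t r r0 cond, of K'] M \<tau>M tau K
    unfolding F_def M_def K'_def by (simp add: less_imp_le)
  moreover have "F 0 M = F 0 (\<tau> ks) + F (\<tau> ks) M"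
    using window_mass_split[of 0 "\<tau> ks" M t] tau K \<tau>M
    unfolding F_def by (simp add: less_imp_le distrib_left sum.distrib)
  moreover have "F 0 M = (\<Sum>k\<in>K. p k)"
    using window_mass_whole[OF t] srt unfolding F_def M_def by simp
  ultimately have low: "F 0 (\<tau> ks) \<le> p ks" using M sum_K[of p] by simp
  have "continuous_on {0..M - \<tau> ks} (\<lambda>a. F a (a + \<tau> ks))"
    unfolding F_def window_mass_def by (intro continuous_intros)
  then obtain a where "0 \<le> a" "a \<le> M - \<tau> ks" "F a (a + \<tau> ks) = p ks"
    using IVT'[of "\<lambda>a. F a (a + \<tau> ks)" 0 "p ks" "M - \<tau> ks"] low up \<tau>M by auto
  then show ?thesis using that unfolding F_def M_def by auto
qed

lemma residual_witness_above_window: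
  assumes t: "\<forall>i<n. 0 \<le> t i"
    and r: "\<forall>i j. i \<le> j \<and> j < n \<longrightarrow> r i \<le> r j"
    and ab: "0 \<le> a" "a < b" and m: "0 \<le> m" "b \<le> prefix_sum t n - m"
    and P: "P * (b - a) \<le> (\<Sum>i<n. r i * window_mass t a b i) * m"
  shows "\<exists>c. (\<forall>i<n. 0 \<le> c i \<and> c i \<le> t i - window_mass t a b i) \<and>
    (\<Sum>i<n. c i) = m \<and> P \<le> (\<Sum>i<n. r i * c i)"
proof -
  define M where "M = prefix_sum t n"
  define c where "c = window_mass t (M - m) M"
  have "0 \<le> c i \<and> c i \<le> t i - window_mass t a b i" if i: "i < n" for i
  proof
    show "0 \<le> c i" unfolding c_def using window_mass_nonneg t i m by auto
    have "window_mass t a M i = window_mass t a b i + window_mass t b (M - m) i + c i"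
      using window_mass_split[of a b M t i] window_mass_split[of b "M - m" M t i] ab m
      unfolding c_def M_def by auto
    moreover have "window_mass t a M i \<le> t i" using window_mass_le t i ab m unfolding M_def by auto
    moreover have "0 \<le> window_mass t b (M - m) i" using window_mass_nonneg t i m unfolding M_def by auto
    ultimately show "c i \<le> t i - window_mass t a b i" by simp
  qed
  moreover have "(\<Sum>i<n. c i) = m"
    using sum_window_mass[OF t, of "M - m" M] ab m unfolding c_def M_def by auto
  moreover have "P \<le> (\<Sum>i<n. r i * c i)"
  proof -
    have "(\<Sum>i<n. r i * window_mass t a b i) * (M - (M - m)) \<le> (\<Sum>i<n. r i * c i) * (b - a)"
      using window_average_le_top_window[OF t r, of a b "M - m"] ab m unfolding c_def M_def by auto
    then have "P * (b - a) \<le> (\<Sum>i<n. r i * c i) * (b - a)" using P by simp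
    then show ?thesis using ab by simp
  qed
  ultimately show ?thesis by blast
qed

lemma residual_witness_overlapping_window:
  assumes t: "\<forall>i<n. 0 \<le> t i"
    and ab: "0 \<le> a" "a \<le> b" "b \<le> prefix_sum t n"
    and m: "prefix_sum t n - b < m" "m + (b - a) \<le> prefix_sum t n"
    and P: "P + (\<Sum>i<n. r i * window_mass t a b i)
      \<le> (\<Sum>i<n. r i * window_mass t (prefix_sum t n - (m + (b - a))) (prefix_sum t n) i)"
  shows "\<exists>c. (\<forall>i<n. 0 \<le> c i \<and> c i \<le> t i - window_mass t a b i) \<and>
    (\<Sum>i<n. c i) = m \<and> P \<le> (\<Sum>i<n. r i * c i)"
proof -
  define M where "M = prefix_sum t n"
  define x where "x = M - (m + (b - a))"
  define c where "c i = window_mass t x M i - window_mass t a b i" for i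
  have x: "0 \<le> x" "x \<le> a" using m unfolding x_def M_def by auto
  have split: "window_mass t x M i = window_mass t x a i + window_mass t a b i + window_mass t b M i"
    for i
    using window_mass_split[of x a M t i] window_mass_split[of a b M t i] x ab m
    unfolding M_def by auto
  have "0 \<le> c i \<and> c i \<le> t i - window_mass t a b i" if i: "i < n" for i
    using split[of i] window_mass_nonneg[of x a t i] window_mass_nonneg[of b M t i]
      window_mass_le[of x M t i] t i x ab m
    unfolding c_def M_def by auto
  moreover have "(\<Sum>i<n. c i) = m"
    using sum_window_mass[OF t, of x M] sum_window_mass[OF t, of a b] x ab m
    unfolding c_def sum_subtractf M_def x_def by auto
  moreover have "P \<le> (\<Sum>i<n. r i * c i)"
    using P unfolding c_def right_diff_distrib sum_subtractf x_def M_def by simp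
  ultimately show ?thesis by blast
qed

lemma transport_condition_residual:
  assumes t: "\<forall>i<n. 0 \<le> t i"
    and r: "\<forall>i j. i \<le> j \<and> j < n \<longrightarrow> r i \<le> r j" and r0: "\<forall>i<n. 0 \<le> r i"
    and K: "finite K" "ks \<in> K" and tau: "\<forall>k\<in>K. 0 < \<tau> k"
    and ks: "\<forall>k\<in>K. p k / \<tau> k \<le> p ks / \<tau> ks"
    and st: "(\<Sum>i<n. t i) = (\<Sum>k\<in>K. \<tau> k)"
    and cond: "transport_condition n r t K \<tau> p"
    and a: "0 \<le> a" "a + \<tau> ks \<le> prefix_sum t n"
    and w: "(\<Sum>i<n. r i * window_mass t a (a + \<tau> ks) i) = p ks"
  shows "transport_condition n r (\<lambda>i. t i - window_mass t a (a + \<tau> ks) i) (K - {ks}) \<tau> p"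
proof (rule transport_conditionI)
  fix S assume S: "S \<subseteq> K - {ks}"
  define M where "M = prefix_sum t n"
  define b where "b = a + \<tau> ks"
  define m where "m = (\<Sum>k\<in>S. \<tau> k)"
  have S_ins: "(\<Sum>k\<in>insert ks S. f k) = f ks + (\<Sum>k\<in>S. f k)" for f :: "nat \<Rightarrow> real"
    using S K finite_subset by (subst sum.insert) auto
  have \<tau>ks: "0 < \<tau> ks" using tau K by auto
  have m0: "0 \<le> m" unfolding m_def using S tau by (intro sum_nonneg) (auto simp: less_imp_le)
  have "m + \<tau> ks \<le> (\<Sum>k\<in>K. \<tau> k)"
    using sum_mono2[of K "insert ks S" \<tau>] S_ins[of \<tau>] S K tau unfolding m_def by fastforce
  then have mM: "m + (b - a) \<le> M" using st unfolding M_def b_def prefix_sum_def by simp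
  have "\<exists>c. (\<forall>i<n. 0 \<le> c i \<and> c i \<le> t i - window_mass t a b i) \<and>
    (\<Sum>i<n. c i) = m \<and> (\<Sum>k\<in>S. p k) \<le> (\<Sum>i<n. r i * c i)"
  proof (cases "b \<le> M - m")
    case True
    have "(\<Sum>k\<in>S. p k) \<le> (\<Sum>k\<in>S. p ks / \<tau> ks * \<tau> k)"
      using ks tau S by (intro sum_mono) (auto simp: divide_le_eq)
    also have "\<dots> = p ks / \<tau> ks * m" unfolding m_def by (simp add: sum_distrib_left)
    finally have "(\<Sum>k\<in>S. p k) * (b - a) \<le> (\<Sum>i<n. r i * window_mass t a b i) * m"
      using \<tau>ks w unfolding b_def by (simp add: field_simps)
    then show ?thesis
      using residual_witness_above_window[OF t r, of a b m] a True m0 tau K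
      unfolding M_def b_def by auto
  next
    case False
    have "(\<Sum>k\<in>insert ks S. p k)
      \<le> (\<Sum>i<n. r i * window_mass t (M - (\<Sum>k\<in>insert ks S. \<tau> k)) M i)"
      using transport_condition_top_window[OF t r r0 cond, of "insert ks S"] S K mM S_ins[of \<tau>]
      unfolding M_def m_def b_def by auto
    then have "(\<Sum>k\<in>S. p k) + (\<Sum>i<n. r i * window_mass t a b i)
      \<le> (\<Sum>i<n. r i * window_mass t (M - (m + (b - a))) M i)"
      using S_ins[of p] S_ins[of \<tau>] w unfolding m_def b_def by (simp add: add.commute)
    then show ?thesis
      using residual_witness_overlapping_window[OF t, of a b m] a False mM \<tau>ks
      unfolding M_def b_def by auto
  qed
  then show "\<exists>c. (\<forall>i<n. 0 \<le> c i \<and> c i \<le> t i - window_mass t a (a + \<tau> ks) i) \<and>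
    (\<Sum>i<n. c i) \<le> (\<Sum>k\<in>S. \<tau> k) \<and> (\<Sum>k\<in>S. p k) \<le> (\<Sum>i<n. r i * c i)"
    unfolding b_def m_def by auto
qed

definition transport_plan ::
  "nat \<Rightarrow> (nat \<Rightarrow> real) \<Rightarrow> (nat \<Rightarrow> real) \<Rightarrow> nat set \<Rightarrow> (nat \<Rightarrow> real) \<Rightarrow> (nat \<Rightarrow> real)
    \<Rightarrow> (nat \<Rightarrow> nat \<Rightarrow> real) \<Rightarrow> bool"
where
  "transport_plan n r t K \<tau> p X \<longleftrightarrow> (\<forall>k\<in>K. \<forall>i<n. 0 \<le> X k i) \<and> (\<forall>i<n. (\<Sum>k\<in>K. X k i) = t i) \<and>
     (\<forall>k\<in>K. (\<Sum>i<n. X k i) = \<tau> k) \<and> (\<forall>k\<in>K. (\<Sum>i<n. r i * X k i) = p k)"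

lemma transport_plan_empty:
  assumes "\<forall>i<n. 0 \<le> t i" "(\<Sum>i<n. t i) = 0"
  shows "transport_plan n r t {} \<tau> p X"
proof -
  have "\<forall>i\<in>{..<n}. t i = 0" using assms sum_nonneg_eq_0_iff[OF finite_lessThan] by auto
  then show ?thesis unfolding transport_plan_def by auto
qed

lemma transport_plan_insert:
  assumes "finite K" "ks \<notin> K" and X: "transport_plan n r (\<lambda>i. t i - w i) K \<tau> p X"
    and w: "\<forall>i<n. 0 \<le> w i" "(\<Sum>i<n. w i) = \<tau> ks" "(\<Sum>i<n. r i * w i) = p ks"
  shows "transport_plan n r t (insert ks K) \<tau> p (X(ks := w))"
proof -
  have "(\<Sum>k\<in>K. (X(ks := w)) k i) = (\<Sum>k\<in>K. X k i)" for i
    using assms(2) by (intro sum.cong) auto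
  then show ?thesis using assms unfolding transport_plan_def by auto
qed

lemma transport_serve_sink:
  assumes t: "\<forall>i<n. 0 \<le> t i"
    and r: "\<forall>i j. i \<le> j \<and> j < n \<longrightarrow> r i \<le> r j" and r0: "\<forall>i<n. 0 \<le> r i"
    and K: "finite K" "ks \<in> K" and tau: "\<forall>k\<in>K. 0 < \<tau> k"
    and ks: "\<forall>k\<in>K. p k / \<tau> k \<le> p ks / \<tau> ks"
    and st: "(\<Sum>i<n. t i) = (\<Sum>k\<in>K. \<tau> k)"
    and srt: "(\<Sum>i<n. r i * t i) = (\<Sum>k\<in>K. p k)"
    and cond: "transport_condition n r t K \<tau> p"
  obtains w where "\<forall>i<n. 0 \<le> w i \<and> w i \<le> t i" "(\<Sum>i<n. w i) = \<tau> ks" "(\<Sum>i<n. r i * w i) = p ks"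
    "transport_condition n r (\<lambda>i. t i - w i) (K - {ks}) \<tau> p"
proof -
  obtain a where a: "0 \<le> a" "a + \<tau> ks \<le> prefix_sum t n"
    and w: "(\<Sum>i<n. r i * window_mass t a (a + \<tau> ks) i) = p ks"
    using transport_window_exists[OF t r r0 K tau st srt cond] .
  have "0 \<le> \<tau> ks" using tau K by (simp add: less_imp_le)
  then show ?thesis
    using that[of "window_mass t a (a + \<tau> ks)"] window_mass_nonneg[of a "a + \<tau> ks" t]
      window_mass_le[of a "a + \<tau> ks" t] sum_window_mass[OF t, of a "a + \<tau> ks"] a w t
      transport_condition_residual[OF t r r0 K tau ks st cond a w]
    by auto
qed

text \<open>Serving first the sink of largest value density keeps the condition for the others.\<close>

theorem transport_plan_exists:
  fixes r p \<tau> :: "nat \<Rightarrow> real"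
  assumes "finite K"
    and r: "\<forall>i j. i \<le> j \<and> j < n \<longrightarrow> r i \<le> r j" and r0: "\<forall>i<n. 0 \<le> r i"
    and "\<forall>k\<in>K. 0 < \<tau> k"
    and "\<forall>i<n. 0 \<le> t i"
    and "(\<Sum>i<n. t i) = (\<Sum>k\<in>K. \<tau> k)"
    and "(\<Sum>i<n. r i * t i) = (\<Sum>k\<in>K. p k)"
    and "transport_condition n r t K \<tau> p"
  shows "\<exists>X. transport_plan n r t K \<tau> p X"
  using assms(1,4-)
proof (induction K arbitrary: t rule: finite_psubset_induct)
  case (psubset K)
  note K = psubset.hyps and tau = psubset.prems(1) and t = psubset.prems(2)
    and st = psubset.prems(3) and srt = psubset.prems(4) and cond = psubset.prems(5)
  show ?case
  proof (cases "K = {}")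
    case True
    then show ?thesis using transport_plan_empty t st by auto
  next
    case False
    have "Max ((\<lambda>k. p k / \<tau> k) ` K) \<in> (\<lambda>k. p k / \<tau> k) ` K"
      using K False by (intro Max_in) auto
    then obtain ks where ks: "ks \<in> K" "Max ((\<lambda>k. p k / \<tau> k) ` K) = p ks / \<tau> ks"
      by blast
    have ks_max: "\<forall>k\<in>K. p k / \<tau> k \<le> p ks / \<tau> ks"
      using K Max_ge[of "(\<lambda>k. p k / \<tau> k) ` K"] unfolding ks(2) by simp
    obtain w where w: "\<forall>i<n. 0 \<le> w i \<and> w i \<le> t i" "(\<Sum>i<n. w i) = \<tau> ks"
      "(\<Sum>i<n. r i * w i) = p ks" and cond': "transport_condition n r (\<lambda>i. t i - w i) (K - {ks}) \<tau> p"
      using transport_serve_sink[OF t r r0 K ks(1) tau ks_max st srt cond] .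
    have sum_K: "(\<Sum>k\<in>K. f k) = f ks + (\<Sum>k\<in>K - {ks}. f k)" for f :: "nat \<Rightarrow> real"
      using K ks by (simp add: sum.remove)
    have "\<exists>X. transport_plan n r (\<lambda>i. t i - w i) (K - {ks}) \<tau> p X"
    proof (rule psubset.IH[OF _ _ _ _ _ cond'])
      show "K - {ks} \<subset> K" "\<forall>k\<in>K - {ks}. 0 < \<tau> k" "\<forall>i<n. 0 \<le> t i - w i"
        using ks tau w(1) by auto
      show "(\<Sum>i<n. t i - w i) = (\<Sum>k\<in>K - {ks}. \<tau> k)"
        using st unfolding sum_subtractf w(2) sum_K[of \<tau>] by simp
      show "(\<Sum>i<n. r i * (t i - w i)) = (\<Sum>k\<in>K - {ks}. p k)"
        using srt unfolding right_diff_distrib sum_subtractf w(3) sum_K[of p] by simp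
    qed
    then obtain X where "transport_plan n r (\<lambda>i. t i - w i) (K - {ks}) \<tau> p X" ..
    then have "transport_plan n r t (insert ks (K - {ks})) \<tau> p (X(ks := w))"
      using K w by (intro transport_plan_insert) auto
    then show ?thesis using ks(1) insert_Diff by metis
  qed
qed

section \<open>Unitary matrices and Hermitian diagonalization\<close>

lemma adj_dims [simp]: "dim_row (adj A) = dim_col A" "dim_col (adj A) = dim_row A"
  unfolding adj_def by auto

lemma adj_index [simp]:
  "i < dim_col A \<Longrightarrow> j < dim_row A \<Longrightarrow> adj A $$ (i,j) = cnj (A $$ (j,i))"
  unfolding adj_def by auto

lemma adj_carrier [simp]: "A \<in> carrier_mat n m \<Longrightarrow> adj A \<in> carrier_mat m n"
  unfolding adj_def carrier_mat_def by auto

lemma adj_adj [simp]: "adj (adj A) = A"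
  by (rule eq_matI) auto

lemma adj_one [simp]: "adj (1\<^sub>m n) = 1\<^sub>m n"
  by (rule eq_matI) auto

lemma adj_mult:
  assumes "A \<in> carrier_mat n m" "B \<in> carrier_mat m k"
  shows "adj (A * B) = adj B * adj A"
proof (rule eq_matI)
  fix i j assume "i < dim_row (adj B * adj A)" "j < dim_col (adj B * adj A)"
  then have i: "i < k" and j: "j < n" using assms by auto
  have "adj (A * B) $$ (i,j) = cnj (\<Sum>l<m. A $$ (j,l) * B $$ (l,i))"
    using assms i j by (simp add: index_mult_mat scalar_prod_def lessThan_atLeast0)
  also have "\<dots> = (\<Sum>l<m. cnj (B $$ (l,i)) * cnj (A $$ (j,l)))"
    by (simp add: mult.commute)
  also have "\<dots> = (adj B * adj A) $$ (i,j)"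
    using assms i j by (simp add: index_mult_mat scalar_prod_def lessThan_atLeast0)
  finally show "adj (A * B) $$ (i,j) = (adj B * adj A) $$ (i,j)" .
qed (use assms in auto)

lemma index_adj_mult_mult:
  assumes "W \<in> carrier_mat n n" "M \<in> carrier_mat n n" "k < n" "l < n"
  shows "(adj W * M * W) $$ (k,l) = (\<Sum>a<n. \<Sum>b<n. cnj (W $$ (a,k)) * M $$ (a,b) * W $$ (b,l))"
proof -
  have "(adj W * M * W) $$ (k,l) = (\<Sum>b<n. (\<Sum>a<n. cnj (W $$ (a,k)) * M $$ (a,b)) * W $$ (b,l))"
    using assms by (simp add: index_mult_mat scalar_prod_def lessThan_atLeast0)
  also have "\<dots> = (\<Sum>b<n. \<Sum>a<n. cnj (W $$ (a,k)) * M $$ (a,b) * W $$ (b,l))"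
    by (simp add: sum_distrib_right)
  also have "\<dots> = (\<Sum>a<n. \<Sum>b<n. cnj (W $$ (a,k)) * M $$ (a,b) * W $$ (b,l))"
    by (rule sum.swap)
  finally show ?thesis .
qed

lemma mtrace_mult_comm:
  assumes "A \<in> carrier_mat n m" "B \<in> carrier_mat m n"
  shows "mtrace (A * B) = mtrace (B * A)"
proof -
  have "mtrace (A * B) = (\<Sum>i<n. \<Sum>l<m. A $$ (i,l) * B $$ (l,i))"
    unfolding mtrace_def using assms
    by (intro sum.cong) (auto simp: index_mult_mat scalar_prod_def lessThan_atLeast0)
  also have "\<dots> = (\<Sum>l<m. \<Sum>i<n. B $$ (l,i) * A $$ (i,l))"
    by (subst sum.swap) (simp add: mult.commute)
  also have "\<dots> = mtrace (B * A)"
    unfolding mtrace_def using assms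
    by (intro sum.cong) (auto simp: index_mult_mat scalar_prod_def lessThan_atLeast0)
  finally show ?thesis .
qed

lemma unitary_mat_carrier: "unitary_mat n U \<Longrightarrow> U \<in> carrier_mat n n"
  unfolding unitary_mat_def by simp

lemma unitary_mat_one: "unitary_mat n (1\<^sub>m n)"
  unfolding unitary_mat_def by simp

lemma unitary_mat_mult:
  assumes "unitary_mat n U" "unitary_mat n V"
  shows "unitary_mat n (U * V)"
proof -
  have U: "U \<in> carrier_mat n n" "U * adj U = 1\<^sub>m n" "adj U * U = 1\<^sub>m n"
    and V: "V \<in> carrier_mat n n" "V * adj V = 1\<^sub>m n" "adj V * V = 1\<^sub>m n"
    using assms unfolding unitary_mat_def by auto
  have aU: "adj U \<in> carrier_mat n n" and aV: "adj V \<in> carrier_mat n n" using U V by auto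
  have "U * V * adj (U * V) = U * (V * adj V) * adj U"
    using U(1) V(1) aU aV by (simp add: adj_mult assoc_mult_mat[of _ n n _ n _ n] mult_carrier_mat[of _ n n _ n])
  also have "\<dots> = 1\<^sub>m n" using U V by simp
  moreover have "adj (U * V) * (U * V) = adj V * (adj U * U) * V"
    using U(1) V(1) aU aV by (simp add: adj_mult assoc_mult_mat[of _ n n _ n _ n] mult_carrier_mat[of _ n n _ n])
  moreover have "\<dots> = 1\<^sub>m n" using U V by simp
  ultimately show ?thesis using U V aU aV unfolding unitary_mat_def by auto
qed

lemma adj_mult_conj:
  assumes "A \<in> carrier_mat n n" "U \<in> carrier_mat n n" "V \<in> carrier_mat n n"
  shows "adj (U * V) * A * (U * V) = adj V * (adj U * A * U) * V"
  using assms by (simp add: adj_mult assoc_mult_mat[of _ n n _ n _ n] mult_carrier_mat[of _ n n _ n])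

lemma unitary_conj_eq_imp:
  assumes "unitary_mat n U" "A \<in> carrier_mat n n" "adj U * A * U = D"
  shows "A = U * D * adj U"
proof -
  have U: "U \<in> carrier_mat n n" "U * adj U = 1\<^sub>m n" and aU: "adj U \<in> carrier_mat n n"
    using assms(1) unfolding unitary_mat_def by auto
  have "U * D * adj U = (U * adj U) * A * (U * adj U)"
    using assms(2) U(1) aU unfolding assms(3)[symmetric] by (simp add: assoc_mult_mat[of _ n n _ n _ n] mult_carrier_mat[of _ n n _ n])
  then show ?thesis using U assms(2) by simp
qed

lemma mtrace_unitary_conj:
  assumes "unitary_mat n W" "M \<in> carrier_mat n n"
  shows "mtrace (adj W * M * W) = mtrace M"
proof -
  have W: "W \<in> carrier_mat n n" "W * adj W = 1\<^sub>m n" and aW: "adj W \<in> carrier_mat n n"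
    using assms(1) unfolding unitary_mat_def by auto
  have "mtrace (adj W * M * W) = mtrace (W * (adj W * M))"
    using W aW assms(2) by (intro mtrace_mult_comm) auto
  also have "W * (adj W * M) = M"
    using W aW assms(2) by (simp flip: assoc_mult_mat[of _ n n _ n _ n])
  finally show ?thesis .
qed

lemma adj_unitary_conj:
  assumes "U \<in> carrier_mat n n" "A \<in> carrier_mat n n"
  shows "adj (adj U * A * U) = adj U * adj A * U"
proof -
  have "adj (adj U * A * U) = adj U * (adj A * U)"
    using assms by (simp add: adj_mult[of _ n n _ n] mult_carrier_mat[of _ n n _ n])
  then show ?thesis using assms by (simp add: assoc_mult_mat[of _ n n _ n _ n])
qed

lemma unitary_mat_of_corthogonal:
  fixes ws :: "complex vec list"
  assumes ws: "corthogonal ws" "set ws \<subseteq> carrier_vec n" "length ws = n"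
  obtains U where "unitary_mat n U" "\<And>i. i < n \<Longrightarrow> \<exists>c. col U i = c \<cdot>\<^sub>v ws ! i"
proof -
  define nr where "nr i = (\<Sum>a<n. (cmod (ws ! i $ a))\<^sup>2)" for i
  define c where "c i = complex_of_real (1 / sqrt (nr i))" for i
  define U where "U = mat n n (\<lambda>(a,i). c i * ws ! i $ a)"
  have wsc: "ws ! i \<in> carrier_vec n" if "i < n" for i using ws that by auto
  have self: "ws ! i \<bullet>c ws ! i = complex_of_real (nr i)" if "i < n" for i
  proof -
    have "ws ! i \<bullet>c ws ! i = (\<Sum>a<n. ws ! i $ a * cnj (ws ! i $ a))"
      using wsc[OF that] by (simp add: scalar_prod_def lessThan_atLeast0)
    also have "\<dots> = (\<Sum>a<n. complex_of_real ((cmod (ws ! i $ a))\<^sup>2))"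
      by (simp only: complex_norm_square)
    finally show ?thesis unfolding nr_def by simp
  qed
  have nr_pos: "0 < nr i" if "i < n" for i
  proof -
    have "nr i \<noteq> 0" using corthogonalD[OF ws(1), of i i] self[OF that] ws(3) that by auto
    moreover have "0 \<le> nr i" unfolding nr_def by (intro sum_nonneg) auto
    ultimately show ?thesis by simp
  qed
  have U: "U \<in> carrier_mat n n" unfolding U_def by simp
  have "adj U * U = 1\<^sub>m n"
  proof (rule eq_matI)
    fix i j assume "i < dim_row (1\<^sub>m n)" "j < dim_col (1\<^sub>m n)"
    then have i: "i < n" and j: "j < n" by auto
    have "(adj U * U) $$ (i,j) = (\<Sum>a<n. cnj (c i * ws ! i $ a) * (c j * ws ! j $ a))"
      using i j U by (simp add: index_mult_mat scalar_prod_def lessThan_atLeast0 U_def)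
    also have "\<dots> = cnj (c i) * c j * (ws ! j \<bullet>c ws ! i)"
      using wsc[OF i] wsc[OF j]
      by (simp add: scalar_prod_def lessThan_atLeast0 sum_distrib_left algebra_simps)
    also have "\<dots> = 1\<^sub>m n $$ (i,j)"
    proof (cases "i = j")
      case True
      have "cnj (c i) * c i * complex_of_real (nr i)
          = complex_of_real (1 / sqrt (nr i) * (1 / sqrt (nr i)) * nr i)"
        by (simp only: c_def complex_cnj_complex_of_real of_real_mult)
      also have "1 / sqrt (nr i) * (1 / sqrt (nr i)) * nr i = 1"
        using nr_pos[OF i] by (simp add: field_simps)
      finally show ?thesis using True self[OF i] i by simp
    next
      case False
      then show ?thesis using corthogonalD[OF ws(1), of j i] ws(3) i j by auto
    qed
    finally show "(adj U * U) $$ (i,j) = 1\<^sub>m n $$ (i,j)" .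
  qed (use U in auto)
  moreover from this have "U * adj U = 1\<^sub>m n"
    using mat_mult_left_right_inverse[of "adj U" n U] U by simp
  ultimately have "unitary_mat n U" unfolding unitary_mat_def using U by auto
  moreover have "col U i = c i \<cdot>\<^sub>v ws ! i" if "i < n" for i
    using wsc[OF that] that unfolding U_def by (intro eq_vecI) auto
  ultimately show ?thesis using that by blast
qed

lemma unitary_mat_first_col:
  fixes v :: "complex vec"
  assumes v: "v \<in> carrier_vec n" "v \<noteq> 0\<^sub>v n"
  obtains U c where "unitary_mat n U" "col U 0 = c \<cdot>\<^sub>v v"
proof -
  interpret cof_vec_space n "TYPE(complex)" .
  define b where "b = basis_completion v"
  have b: "set b \<subseteq> carrier_vec n" "distinct b" "\<not> lin_dep (set b)" "hd b = v" "length b = n"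
    using basis_completion[OF v] unfolding b_def by auto
  define ws where "ws = gram_schmidt n b"
  have ws: "corthogonal ws" "set ws \<subseteq> carrier_vec n" "length ws = n"
    using gram_schmidt_result[OF b(1-3) ws_def] b(5) by auto
  have "n \<noteq> 0" using v by auto
  then obtain vs where "b = v # vs" using b(4,5) by (cases b) auto
  then have "hd ws = v" using gram_schmidt_hd[OF v(1), of vs] unfolding ws_def by simp
  then have ws0: "ws ! 0 = v" using hd_conv_nth[of ws] ws(3) \<open>n \<noteq> 0\<close> by auto
  obtain U where U: "unitary_mat n U" "\<And>i. i < n \<Longrightarrow> \<exists>c. col U i = c \<cdot>\<^sub>v ws ! i"
    using unitary_mat_of_corthogonal[OF ws] by blast
  then obtain c where "col U 0 = c \<cdot>\<^sub>v v" using ws0 \<open>n \<noteq> 0\<close> by auto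
  then show ?thesis using that U(1) by blast
qed

lemma unitary_conj_first_col:
  assumes A: "A \<in> carrier_mat n n" and U: "unitary_mat n U"
    and v: "v \<in> carrier_vec n" "A *\<^sub>v v = e \<cdot>\<^sub>v v" "col U 0 = c \<cdot>\<^sub>v v"
    and i: "i < n"
  shows "(adj U * A * U) $$ (i,0) = (if i = 0 then e else 0)"
proof -
  have Uc: "U \<in> carrier_mat n n" and UU: "adj U * U = 1\<^sub>m n"
    using U unfolding unitary_mat_def by auto
  have n: "0 < n" using i by simp
  have "col (A * U) 0 = A *\<^sub>v (c \<cdot>\<^sub>v v)" unfolding col_mult2[OF A Uc n] v(3) ..
  also have "\<dots> = c \<cdot>\<^sub>v (e \<cdot>\<^sub>v v)" using mult_mat_vec[OF A v(1)] v(2) by simp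
  also have "\<dots> = e \<cdot>\<^sub>v col U 0" using v(3) by (simp add: smult_smult_assoc mult.commute)
  finally have "col (A * U) 0 = e \<cdot>\<^sub>v col U 0" .
  have "(adj U * A * U) $$ (i,0) = (adj U * (A * U)) $$ (i,0)"
    using A Uc by (simp add: assoc_mult_mat[of "adj U" n n A n U n])
  also have "\<dots> = row (adj U) i \<bullet> col (A * U) 0"
    using A Uc i n by (intro index_mult_mat(1)) auto
  also have "\<dots> = e * (row (adj U) i \<bullet> col U 0)"
    using \<open>col (A * U) 0 = e \<cdot>\<^sub>v col U 0\<close> Uc by simp
  also have "row (adj U) i \<bullet> col U 0 = (adj U * U) $$ (i,0)"
    using Uc i n by simp
  finally show ?thesis using UU i n by simp
qed

lemma hermitian_unitary_deflation:
  assumes A: "A \<in> carrier_mat (Suc n) (Suc n)" "adj A = A" and e: "eigenvalue A e"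
  obtains U B where "unitary_mat (Suc n) U" "B \<in> carrier_mat n n" "adj B = B"
    "adj U * A * U = four_block_mat (mat 1 1 (\<lambda>_. e)) (0\<^sub>m 1 n) (0\<^sub>m n 1) B"
proof -
  obtain v where v: "v \<in> carrier_vec (Suc n)" "v \<noteq> 0\<^sub>v (Suc n)" "A *\<^sub>v v = e \<cdot>\<^sub>v v"
    using e A unfolding eigenvalue_def eigenvector_def by auto
  obtain U c where U: "unitary_mat (Suc n) U" "col U 0 = c \<cdot>\<^sub>v v"
    using unitary_mat_first_col[OF v(1,2)] .
  define A' where "A' = adj U * A * U"
  define B where "B = mat n n (\<lambda>(i,j). A' $$ (Suc i, Suc j))"
  have A'c: "A' \<in> carrier_mat (Suc n) (Suc n)"
    using A U unfolding A'_def unitary_mat_def by auto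
  have herm: "adj A' = A'"
    unfolding A'_def adj_unitary_conj[OF unitary_mat_carrier[OF U(1)] A(1)] A(2) ..
  have col: "A' $$ (i,0) = (if i = 0 then e else 0)" if "i < Suc n" for i
    unfolding A'_def using unitary_conj_first_col[OF A(1) U(1) v(1,3) U(2) that] .
  have row: "A' $$ (0,j) = (if j = 0 then e else 0)" if "j < Suc n" for j
    using arg_cong[OF herm, of "\<lambda>M. M $$ (0,j)"] col[OF that] A'c that by auto
  have "A' = four_block_mat (mat 1 1 (\<lambda>_. e)) (0\<^sub>m 1 n) (0\<^sub>m n 1) B"
    by (rule eq_matI) (use A'c col row in \<open>auto simp: B_def\<close>)
  moreover have "adj B = B"
  proof (rule eq_matI)
    fix i j assume "i < dim_row B" "j < dim_col B"
    then have "i < n" "j < n" unfolding B_def by auto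
    then show "adj B $$ (i,j) = B $$ (i,j)"
      using arg_cong[OF herm, of "\<lambda>M. M $$ (Suc i, Suc j)"] A'c unfolding B_def by auto
  qed (auto simp: B_def)
  ultimately show ?thesis using that[OF U(1), of B] unfolding A'_def B_def by auto
qed

lemma adj_four_block_one:
  "V \<in> carrier_mat n n \<Longrightarrow> adj (four_block_mat (1\<^sub>m 1) (0\<^sub>m 1 n) (0\<^sub>m n 1) V)
    = four_block_mat (1\<^sub>m 1) (0\<^sub>m 1 n) (0\<^sub>m n 1) (adj V)"
  by (rule eq_matI) auto

lemma mult_four_block_diag:
  assumes "A1 \<in> carrier_mat 1 1" "B1 \<in> carrier_mat n n" "A2 \<in> carrier_mat 1 1" "B2 \<in> carrier_mat n n"
  shows "four_block_mat A1 (0\<^sub>m 1 n) (0\<^sub>m n 1) B1 * four_block_mat A2 (0\<^sub>m 1 n) (0\<^sub>m n 1) B2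
    = four_block_mat (A1 * A2) (0\<^sub>m 1 n) (0\<^sub>m n 1) (B1 * B2)"
  using mult_four_block_mat[OF assms(1) zero_carrier_mat zero_carrier_mat assms(2)
      assms(3) zero_carrier_mat zero_carrier_mat assms(4)] assms
  by simp

lemma unitary_mat_four_block_one:
  assumes "unitary_mat n V"
  shows "unitary_mat (Suc n) (four_block_mat (1\<^sub>m 1) (0\<^sub>m 1 n) (0\<^sub>m n 1) V)"
proof -
  have V: "V \<in> carrier_mat n n" "V * adj V = 1\<^sub>m n" "adj V * V = 1\<^sub>m n"
    and aV: "adj V \<in> carrier_mat n n" using assms unfolding unitary_mat_def by auto
  have "four_block_mat (1\<^sub>m 1) (0\<^sub>m 1 n) (0\<^sub>m n 1) V \<in> carrier_mat (Suc n) (Suc n)"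
    using four_block_carrier_mat[OF one_carrier_mat[of 1] V(1), of "0\<^sub>m 1 n" "0\<^sub>m n 1"] by simp
  then show ?thesis
    unfolding unitary_mat_def adj_four_block_one[OF V(1)]
    using mult_four_block_diag[OF one_carrier_mat V(1) one_carrier_mat aV]
      mult_four_block_diag[OF one_carrier_mat aV one_carrier_mat V(1)] V aV by simp
qed

lemma four_block_one_conj:
  assumes "E \<in> carrier_mat 1 1" "B \<in> carrier_mat n n" "V \<in> carrier_mat n n"
  shows "adj (four_block_mat (1\<^sub>m 1) (0\<^sub>m 1 n) (0\<^sub>m n 1) V)
      * four_block_mat E (0\<^sub>m 1 n) (0\<^sub>m n 1) B * four_block_mat (1\<^sub>m 1) (0\<^sub>m 1 n) (0\<^sub>m n 1) V
    = four_block_mat E (0\<^sub>m 1 n) (0\<^sub>m n 1) (adj V * B * V)"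
  unfolding adj_four_block_one[OF assms(3)]
  using mult_four_block_diag[OF one_carrier_mat adj_carrier[OF assms(3)] assms(1,2)]
    mult_four_block_diag[OF assms(1) mult_carrier_mat[OF adj_carrier[OF assms(3)] assms(2)]
      one_carrier_mat assms(3)] assms by simp

theorem hermitian_unitary_diagonalization:
  fixes A :: "complex mat"
  assumes "A \<in> carrier_mat n n" "adj A = A" "char_poly A = (\<Prod>e\<leftarrow>es. [:- e, 1:])"
    and "length es = n"
  shows "\<exists>V. unitary_mat n V \<and> adj V * A * V = diag_of n (\<lambda>i. es ! i)"
  using assms
proof (induction es arbitrary: n A)
  case Nil
  then show ?case
    by (intro exI[of _ "1\<^sub>m 0"]) (auto simp: unitary_mat_def diag_of_def intro!: eq_matI)
next
  case (Cons e es n A)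
  then obtain m where n: "n = Suc m" and m: "length es = m" by auto
  have A: "A \<in> carrier_mat (Suc m) (Suc m)" using Cons.prems n by simp
  have "eigenvalue A e" using Cons.prems(3) unfolding eigenvalue_root_char_poly[OF A] by simp
  then obtain U B where U: "unitary_mat (Suc m) U" and B: "B \<in> carrier_mat m m" "adj B = B"
    and UAU: "adj U * A * U = four_block_mat (mat 1 1 (\<lambda>_. e)) (0\<^sub>m 1 m) (0\<^sub>m m 1) B"
    using hermitian_unitary_deflation[OF A Cons.prems(2)] by blast
  have Uc: "U \<in> carrier_mat (Suc m) (Suc m)" using U unfolding unitary_mat_def by simp
  have "similar_mat (adj U * A * U) A"
    unfolding similar_mat_def similar_mat_wit_def using U A
    by (intro exI[of _ "adj U"] exI[of _ U]) (auto simp: unitary_mat_def Let_def)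
  then have "char_poly A = char_poly (adj U * A * U)" by (simp add: char_poly_similar)
  also have "\<dots> = char_poly (mat 1 1 (\<lambda>_. e)) * char_poly B"
    unfolding UAU by (rule char_poly_four_block_zeros_col) (use B in auto)
  finally have "char_poly A = char_poly (mat 1 1 (\<lambda>_. e)) * char_poly B" .
  moreover have "char_poly (mat 1 1 (\<lambda>_. e)) = [:- e, 1:]"
    by (simp add: char_poly_defs det_def sign_def)
  ultimately have "[:- e, 1:] * char_poly B = [:- e, 1:] * (\<Prod>e\<leftarrow>es. [:- e, 1:])"
    using Cons.prems(3) by simp
  then have "char_poly B = (\<Prod>e\<leftarrow>es. [:- e, 1:])"
    by (rule mult_left_cancel[THEN iffD1, rotated]) simp
  then obtain V where V: "unitary_mat m V" "adj V * B * V = diag_of m (\<lambda>i. es ! i)"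
    using Cons.IH[OF B(1,2) _ m] by blast
  define W where "W = four_block_mat (1\<^sub>m 1) (0\<^sub>m 1 m) (0\<^sub>m m 1) V"
  have W: "unitary_mat (Suc m) W" unfolding W_def by (rule unitary_mat_four_block_one[OF V(1)])
  have "adj (U * W) * A * (U * W) = adj W * (adj U * A * U) * W"
    using A Uc W by (intro adj_mult_conj) (auto simp: unitary_mat_def)
  also have "\<dots> = four_block_mat (mat 1 1 (\<lambda>_. e)) (0\<^sub>m 1 m) (0\<^sub>m m 1) (diag_of m (\<lambda>i. es ! i))"
    unfolding UAU W_def using four_block_one_conj[of _ B m V] B V by (auto simp: unitary_mat_def)
  also have "\<dots> = diag_of n (\<lambda>i. (e # es) ! i)"
    by (rule eq_matI) (auto simp: diag_of_def n nth_Cons' less_Suc_eq_0_disj split: if_splits)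
  finally show ?case using unitary_mat_mult[OF U W] n by blast
qed

section \<open>Quadratic forms and classical channels\<close>

definition quad_form :: "nat \<Rightarrow> complex mat \<Rightarrow> complex vec \<Rightarrow> complex" where
  "quad_form n M v = (\<Sum>r<n. \<Sum>c<n. cnj (v $ r) * M $$ (r,c) * v $ c)"

lemma quad_form_eq:
  assumes "M \<in> carrier_mat n n" "v \<in> carrier_vec n"
  shows "conjugate v \<bullet> (M *\<^sub>v v) = quad_form n M v"
  unfolding quad_form_def using assms
  by (auto simp: scalar_prod_def mult_mat_vec_def lessThan_atLeast0 sum_distrib_left
      intro!: sum.cong)

lemma psd_quad_form:
  "psd n M \<Longrightarrow> v \<in> carrier_vec n \<Longrightarrow> Im (quad_form n M v) = 0 \<and> 0 \<le> Re (quad_form n M v)"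
  unfolding psd_def using quad_form_eq by auto

lemma psdI:
  assumes "M \<in> carrier_mat n n" "adj M = M"
    and "\<And>v. v \<in> carrier_vec n \<Longrightarrow> Im (quad_form n M v) = 0 \<and> 0 \<le> Re (quad_form n M v)"
  shows "psd n M"
  unfolding psd_def using assms quad_form_eq by auto

lemma index_adj_mult_mult_diag:
  assumes "W \<in> carrier_mat n n" "M \<in> carrier_mat n n" "k < n"
  shows "(adj W * M * W) $$ (k,k) = quad_form n M (col W k)"
  unfolding index_adj_mult_mult[OF assms(1,2,3,3)] quad_form_def using assms by simp

lemma sum_mult_blocks:
  fixes n d :: nat
  shows "(\<Sum>r<n * d. f r) = (\<Sum>a<n. \<Sum>k<d. f (a * d + k))"
proof (induction n)
  case (Suc n)
  have "(\<Sum>r<m + d. f r) = (\<Sum>r<m. f r) + (\<Sum>k<d. f (m + k))" for m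
    by (induction d) (auto simp: add.assoc)
  from this[of "n * d"] show ?case using Suc by (simp add: add.commute)
qed simp

lemma block_index_less:
  assumes "a < n" "k < d"
  shows "a * d + k < n * (d::nat)"
proof -
  have "a * d + k < Suc a * d" using assms(2) by simp
  also have "\<dots> \<le> n * d" using assms(1) by (intro mult_right_mono) auto
  finally show ?thesis .
qed

lemma quad_form_blocks:
  "quad_form (n * d) M v = (\<Sum>a<n. \<Sum>k<d. \<Sum>b<n. \<Sum>l<d.
     cnj (v $ (a * d + k)) * M $$ (a * d + k, b * d + l) * v $ (b * d + l))"
  unfolding quad_form_def sum_mult_blocks ..

(* Dephasing followed by the stochastic matrix G acting on the populations. *)
definition classical_channel :: "nat \<Rightarrow> (nat \<Rightarrow> nat \<Rightarrow> real) \<Rightarrow> complex mat \<Rightarrow> complex mat" where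
  "classical_channel d G M =
     mat d d (\<lambda>(k,l). if k = l then (\<Sum>i<d. complex_of_real (G k i) * M $$ (i,i)) else 0)"

lemma classical_channel_dims [simp]:
  "dim_row (classical_channel d G M) = d" "dim_col (classical_channel d G M) = d"
  unfolding classical_channel_def by simp_all

lemma classical_channel_carrier [simp]: "classical_channel d G M \<in> carrier_mat d d"
  unfolding classical_channel_def by simp

lemma index_classical_channel:
  "k < d \<Longrightarrow> l < d \<Longrightarrow> classical_channel d G M $$ (k,l)
    = (if k = l then (\<Sum>i<d. complex_of_real (G k i) * M $$ (i,i)) else 0)"
  unfolding classical_channel_def by simp

lemma index_ampliation_classical_channel:
  assumes "a < n" "b < n" "k < d" "l < d"
  shows "ampliation d n (classical_channel d G) X $$ (a * d + k, b * d + l) =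
    (if k = l then (\<Sum>i<d. complex_of_real (G k i) * X $$ (a * d + i, b * d + i)) else 0)"
  using assms block_index_less[of a n k d] block_index_less[of b n l d]
  by (simp add: ampliation_def classical_channel_def)

text \<open>Complete positivity: the quadratic form of the amplified channel is a nonnegative
  combination of quadratic forms of the input, evaluated at vectors u k i that move the
  k-th entries of the blocks of v to the i-th positions.\<close>

lemma quad_form_ampliation_classical_channel:
  fixes v :: "complex vec" and n d :: nat
  defines "u k i \<equiv> vec (n * d) (\<lambda>s. if s mod d = i then v $ (s div d * d + k) else 0)"
  shows "quad_form (n * d) (ampliation d n (classical_channel d G) X) v
    = (\<Sum>k<d. \<Sum>i<d. complex_of_real (G k i) * quad_form (n * d) X (u k i))"
proof -
  define T where "T k i a b = cnj (v $ (a * d + k)) * X $$ (a * d + i, b * d + i) * v $ (b * d + k)"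
    for k i a b
  have u: "quad_form (n * d) X (u k i) = (\<Sum>a<n. \<Sum>b<n. T k i a b)" if "k < d" "i < d" for k i
  proof -
    have "quad_form (n * d) X (u k i) = (\<Sum>a<n. \<Sum>i'<d. \<Sum>b<n. \<Sum>i''<d.
        (if i'' = i then (if i' = i then T k i a b else 0) else 0))"
      unfolding quad_form_blocks
      by (intro sum.cong refl) (auto simp: u_def T_def block_index_less)
    also have "\<dots> = (\<Sum>a<n. \<Sum>i'<d. \<Sum>b<n. (if i' = i then T k i a b else 0))"
      using that by (simp add: sum.delta)
    also have "\<dots> = (\<Sum>a<n. \<Sum>i'<d. (if i' = i then (\<Sum>b<n. T k i a b) else 0))"
      by (intro sum.cong refl) auto
    also have "\<dots> = (\<Sum>a<n. \<Sum>b<n. T k i a b)"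
      using that by (simp add: sum.delta)
    finally show ?thesis .
  qed
  have "quad_form (n * d) (ampliation d n (classical_channel d G) X) v
      = (\<Sum>a<n. \<Sum>k<d. \<Sum>b<n. \<Sum>l<d.
          (if l = k then (\<Sum>i<d. complex_of_real (G k i) * T k i a b) else 0))"
    unfolding quad_form_blocks
    by (intro sum.cong refl)
      (auto simp: index_ampliation_classical_channel T_def sum_distrib_left sum_distrib_right
        mult.assoc mult.left_commute)
  also have "\<dots> = (\<Sum>a<n. \<Sum>k<d. \<Sum>b<n. \<Sum>i<d. complex_of_real (G k i) * T k i a b)"
    by (simp add: sum.delta)
  also have "\<dots> = (\<Sum>k<d. \<Sum>a<n. \<Sum>b<n. \<Sum>i<d. complex_of_real (G k i) * T k i a b)"
    by (rule sum.swap)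
  also have "\<dots> = (\<Sum>k<d. \<Sum>a<n. \<Sum>i<d. \<Sum>b<n. complex_of_real (G k i) * T k i a b)"
    by (rule sum.cong[OF refl], rule sum.cong[OF refl], rule sum.swap)
  also have "\<dots> = (\<Sum>k<d. \<Sum>i<d. \<Sum>a<n. \<Sum>b<n. complex_of_real (G k i) * T k i a b)"
    by (rule sum.cong[OF refl], rule sum.swap)
  also have "\<dots> = (\<Sum>k<d. \<Sum>i<d. complex_of_real (G k i) * (\<Sum>a<n. \<Sum>b<n. T k i a b))"
    by (simp add: sum_distrib_left)
  finally show ?thesis using u by simp
qed

lemma index_ampliation_classical_channel_div_mod:
  assumes "r < n * d" "c < n * d"
  shows "ampliation d n (classical_channel d G) X $$ (r,c) = (if r mod d = c mod d then
     (\<Sum>i<d. complex_of_real (G (r mod d) i) * X $$ (r div d * d + i, c div d * d + i)) else 0)"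
proof -
  have "0 < d" using assms by (cases d) auto
  then show ?thesis using assms by (simp add: ampliation_def classical_channel_def)
qed

lemma hermitian_cnj_index:
  assumes "adj X = X" "X \<in> carrier_mat n n" "i < n" "j < n"
  shows "cnj (X $$ (i,j)) = X $$ (j,i)"
  using arg_cong[OF assms(1), of "\<lambda>M. M $$ (j,i)"] assms(2-4) by simp

lemma psd_ampliation_classical_channel:
  assumes G: "\<forall>k<d. \<forall>i<d. 0 \<le> G k i" and X: "psd (n * d) X"
  shows "psd (n * d) (ampliation d n (classical_channel d G) X)"
proof (rule psdI)
  define Y where "Y = ampliation d n (classical_channel d G) X"
  have Xc: "X \<in> carrier_mat (n * d) (n * d)" and Xh: "adj X = X" using X unfolding psd_def by auto
  show Yc: "Y \<in> carrier_mat (n * d) (n * d)" unfolding Y_def ampliation_def by simp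
  have block: "r div d * d + i < n * d" if "r < n * d" "i < d" for r i
    using block_index_less[of "r div d" n i d] that by (simp add: less_mult_imp_div_less)
  show "adj Y = Y"
  proof (rule eq_matI)
    fix r c assume "r < dim_row Y" "c < dim_col Y"
    then have rc: "r < n * d" "c < n * d" using Yc by auto
    then show "adj Y $$ (r,c) = Y $$ (r,c)"
      using Yc unfolding Y_def
      by (auto simp: index_ampliation_classical_channel_div_mod hermitian_cnj_index[OF Xh Xc] block)
  qed (use Yc in auto)
  fix v :: "complex vec" assume "v \<in> carrier_vec (n * d)"
  have "Im (complex_of_real (G k i) * quad_form (n * d) X w) = 0 \<and>
      0 \<le> Re (complex_of_real (G k i) * quad_form (n * d) X w)"
    if "k < d" "i < d" "w \<in> carrier_vec (n * d)" for k i w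
    using psd_quad_form[OF X that(3)] G that by simp
  then show "Im (quad_form (n * d) Y v) = 0 \<and> 0 \<le> Re (quad_form (n * d) Y v)"
    unfolding Y_def quad_form_ampliation_classical_channel
    by (auto simp: Im_sum Re_sum intro!: sum_nonneg sum.neutral)
qed

lemma quantum_channel_classical_channel:
  assumes G0: "\<forall>k<d. \<forall>i<d. 0 \<le> G k i" and G1: "\<forall>i<d. (\<Sum>k<d. G k i) = 1"
  shows "quantum_channel d (classical_channel d G)"
proof -
  have "mtrace (classical_channel d G X) = mtrace X" if "X \<in> carrier_mat d d" for X
  proof -
    have "mtrace (classical_channel d G X) = (\<Sum>k<d. \<Sum>i<d. complex_of_real (G k i) * X $$ (i,i))"
      unfolding mtrace_def by (simp add: index_classical_channel)
    also have "\<dots> = (\<Sum>i<d. complex_of_real (\<Sum>k<d. G k i) * X $$ (i,i))"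
      by (subst sum.swap) (simp add: sum_distrib_right)
    finally show ?thesis unfolding mtrace_def using that G1 by simp
  qed
  then show ?thesis
    unfolding quantum_channel_def using psd_ampliation_classical_channel[OF G0]
    by (auto intro!: eq_matI simp: index_classical_channel sum.distrib distrib_left
        sum_distrib_left algebra_simps)
qed

primrec mat_sum :: "nat \<Rightarrow> (nat \<Rightarrow> complex mat) \<Rightarrow> nat \<Rightarrow> complex mat" where
  "mat_sum d f 0 = 0\<^sub>m d d"
| "mat_sum d f (Suc m) = mat_sum d f m + f m"

lemma mat_sum_carrier: "\<forall>j<m. f j \<in> carrier_mat d d \<Longrightarrow> mat_sum d f m \<in> carrier_mat d d"
  by (induction m) auto

lemma index_mat_sum:
  assumes "\<forall>j<m. f j \<in> carrier_mat d d" "a < d" "b < d"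
  shows "mat_sum d f m $$ (a,b) = (\<Sum>j<m. f j $$ (a,b))"
  using assms(1)
proof (induction m)
  case (Suc m)
  then have "f m \<in> carrier_mat d d" by simp
  then show ?case using Suc assms(2,3) carrier_matD[OF \<open>f m \<in> carrier_mat d d\<close>] by simp
qed (use assms in simp)

lemma quantum_channel_mat_sum:
  assumes "quantum_channel d \<Lambda>" "\<forall>j<m. P j \<in> carrier_mat d d"
  shows "\<Lambda> (mat_sum d (\<lambda>j. c j \<cdot>\<^sub>m P j) m) = mat_sum d (\<lambda>j. c j \<cdot>\<^sub>m \<Lambda> (P j)) m"
  using assms(2)
proof (induction m)
  case 0
  have "\<Lambda> (0 \<cdot>\<^sub>m 0\<^sub>m d d) = 0 \<cdot>\<^sub>m \<Lambda> (0\<^sub>m d d)" "\<Lambda> (0\<^sub>m d d) \<in> carrier_mat d d"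
    using assms(1) zero_carrier_mat[of d d] unfolding quantum_channel_def by blast+
  moreover have "0 \<cdot>\<^sub>m (0\<^sub>m d d :: complex mat) = 0\<^sub>m d d" by (rule eq_matI) auto
  moreover have "0 \<cdot>\<^sub>m \<Lambda> (0\<^sub>m d d) = 0\<^sub>m d d" using calculation(2) by (intro eq_matI) auto
  ultimately show ?case by simp
next
  case (Suc m)
  then show ?case
    using assms(1) mat_sum_carrier[of m "\<lambda>j. c j \<cdot>\<^sub>m P j" d] unfolding quantum_channel_def by simp
qed

lemma index_adj_mult_add:
  assumes "W \<in> carrier_mat d d" "A \<in> carrier_mat d d" "B \<in> carrier_mat d d" "k < d"
  shows "(adj W * (A + B) * W) $$ (k,k) = (adj W * A * W) $$ (k,k) + (adj W * B * W) $$ (k,k)"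
  unfolding index_adj_mult_mult[OF assms(1) add_carrier_mat[OF assms(3)] assms(4,4)]
    index_adj_mult_mult[OF assms(1,2,4,4)] index_adj_mult_mult[OF assms(1,3,4,4)]
  using assms by (simp add: algebra_simps sum.distrib)

lemma index_adj_mult_smult:
  assumes "W \<in> carrier_mat d d" "A \<in> carrier_mat d d" "k < d"
  shows "(adj W * (c \<cdot>\<^sub>m A) * W) $$ (k,k) = c * (adj W * A * W) $$ (k,k)"
  unfolding index_adj_mult_mult[OF assms(1) smult_carrier_mat[OF assms(2)] assms(3,3)]
    index_adj_mult_mult[OF assms(1,2,3,3)]
  using assms by (simp add: algebra_simps sum_distrib_left)

lemma index_adj_mult_mat_sum:
  assumes W: "W \<in> carrier_mat d d" and "\<forall>j<m. P j \<in> carrier_mat d d" and k: "k < d"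
  shows "(adj W * mat_sum d (\<lambda>j. c j \<cdot>\<^sub>m P j) m * W) $$ (k,k)
    = (\<Sum>j<m. c j * (adj W * P j * W) $$ (k,k))"
  using assms(2)
proof (induction m)
  case (Suc m)
  define S where "S = mat_sum d (\<lambda>j. c j \<cdot>\<^sub>m P j) m"
  have S: "S \<in> carrier_mat d d" unfolding S_def using Suc.prems by (intro mat_sum_carrier) auto
  have P: "P m \<in> carrier_mat d d" using Suc.prems by simp
  have IH: "(adj W * S * W) $$ (k,k) = (\<Sum>j<m. c j * (adj W * P j * W) $$ (k,k))"
    unfolding S_def using Suc by simp
  show ?case
    unfolding mat_sum.simps(2) S_def[symmetric] index_adj_mult_add[OF W S smult_carrier_mat[OF P] k]
      index_adj_mult_smult[OF W P k] IH by simp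
qed (use assms in \<open>simp add: index_adj_mult_mult\<close>)

definition rank_one :: "nat \<Rightarrow> complex vec \<Rightarrow> complex mat" where
  "rank_one d v = mat d d (\<lambda>(a,b). v $ a * cnj (v $ b))"

lemma rank_one_carrier [simp]: "rank_one d v \<in> carrier_mat d d"
  unfolding rank_one_def by simp

lemma psd_rank_one: "psd d (rank_one d v)"
proof (rule psdI)
  show "adj (rank_one d v) = rank_one d v" by (rule eq_matI) (auto simp: rank_one_def)
  fix u :: "complex vec"
  define z where "z = (\<Sum>r<d. cnj (u $ r) * v $ r)"
  have "quad_form d (rank_one d v) u = z * cnj z"
    unfolding quad_form_def rank_one_def z_def
    by (simp add: sum_distrib_left sum_distrib_right algebra_simps)
  then show "Im (quad_form d (rank_one d v) u) = 0 \<and> 0 \<le> Re (quad_form d (rank_one d v) u)"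
    by (simp flip: complex_norm_square)
qed simp

lemma unitary_diag_eq_mat_sum:
  assumes Q: "Q \<in> carrier_mat d d"
  shows "Q * diag_of d f * adj Q = mat_sum d (\<lambda>j. f j \<cdot>\<^sub>m rank_one d (col Q j)) d"
proof (rule eq_matI)
  have P: "\<forall>j<d. f j \<cdot>\<^sub>m rank_one d (col Q j) \<in> carrier_mat d d" by simp
  fix a b assume "a < dim_row (mat_sum d (\<lambda>j. f j \<cdot>\<^sub>m rank_one d (col Q j)) d)"
    "b < dim_col (mat_sum d (\<lambda>j. f j \<cdot>\<^sub>m rank_one d (col Q j)) d)"
  then have a: "a < d" and b: "b < d" using mat_sum_carrier[OF P] by auto
  have "(Q * diag_of d f) $$ (a,j) = Q $$ (a,j) * f j" if "j < d" for j
    using Q a that by (simp add: index_mult_mat scalar_prod_def lessThan_atLeast0 diag_of_def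
        if_distrib sum.delta cong: if_cong)
  then have "(Q * diag_of d f * adj Q) $$ (a,b) = (\<Sum>j<d. Q $$ (a,j) * f j * cnj (Q $$ (b,j)))"
    using Q a b by (simp add: index_mult_mat(1)[of a _ b] scalar_prod_def lessThan_atLeast0 diag_of_def)
  also have "\<dots> = mat_sum d (\<lambda>j. f j \<cdot>\<^sub>m rank_one d (col Q j)) d $$ (a,b)"
    using index_mat_sum[OF P a b] Q a b by (auto simp: rank_one_def algebra_simps intro!: sum.cong)
  finally show "(Q * diag_of d f * adj Q) $$ (a,b)
      = mat_sum d (\<lambda>j. f j \<cdot>\<^sub>m rank_one d (col Q j)) d $$ (a,b)" .
qed (use Q mat_sum_carrier[of d "\<lambda>j. f j \<cdot>\<^sub>m rank_one d (col Q j)" d] in \<open>auto simp: diag_of_def\<close>)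

lemma quantum_channel_psd:
  assumes "quantum_channel d \<Lambda>" "psd d M"
  shows "psd d (\<Lambda> M)"
proof -
  have M: "M \<in> carrier_mat d d" and \<Lambda>M: "\<Lambda> M \<in> carrier_mat d d"
    using assms unfolding psd_def quantum_channel_def by auto
  have "ampliation d 1 \<Lambda> M = \<Lambda> M"
  proof -
    have "mat d d (\<lambda>(i,j). M $$ (i,j)) = M" by (rule eq_matI) (use M in auto)
    then show ?thesis using \<Lambda>M by (intro eq_matI) (auto simp: ampliation_def)
  qed
  then show ?thesis using assms unfolding quantum_channel_def by (metis mult_1)
qed

section \<open>Thermal polytopes\<close>

definition gibbs_weight :: "nat \<Rightarrow> (nat \<Rightarrow> real) \<Rightarrow> real \<Rightarrow> nat \<Rightarrow> real" where
  "gibbs_weight d E \<beta> i = exp (- \<beta> * E i) / (\<Sum>k<d. exp (- \<beta> * E k))"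

lemma gibbs_eq_diag_of: "gibbs d E \<beta> = diag_of d (\<lambda>i. complex_of_real (gibbs_weight d E \<beta> i))"
  unfolding gibbs_def gibbs_weight_def ..

lemma gibbs_weight_pos: "i < d \<Longrightarrow> 0 < gibbs_weight d E \<beta> i"
  unfolding gibbs_weight_def by (intro divide_pos_pos sum_pos) auto

lemma gibbs_weight_antimono:
  assumes "\<forall>i j. i \<le> j \<and> j < d \<longrightarrow> E i \<le> E j" "0 < \<beta>" "i \<le> j" "j < d"
  shows "gibbs_weight d E \<beta> j \<le> gibbs_weight d E \<beta> i"
proof -
  have "0 < (\<Sum>k<d. exp (- \<beta> * E k))" using assms by (intro sum_pos) auto
  moreover have "exp (- \<beta> * E j) \<le> exp (- \<beta> * E i)" using assms by simp
  ultimately show ?thesis unfolding gibbs_weight_def by (simp add: divide_right_mono)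
qed

text \<open>W only mixes levels of equal energy, on which the Gibbs state is constant.\<close>

lemma energy_basis_change_gibbs:
  assumes W: "energy_basis_change d E W" and k: "k < d"
  shows "(adj W * gibbs d E \<beta> * W) $$ (k,k) = complex_of_real (gibbs_weight d E \<beta> k)"
proof -
  define g where "g i = complex_of_real (gibbs_weight d E \<beta> i)" for i
  have Wc: "W \<in> carrier_mat d d" and WW: "adj W * W = 1\<^sub>m d"
    and W0: "\<forall>i<d. \<forall>j<d. E i \<noteq> E j \<longrightarrow> W $$ (i,j) = 0"
    using W unfolding energy_basis_change_def unitary_mat_def by auto
  have G: "gibbs d E \<beta> \<in> carrier_mat d d" by (simp add: gibbs_def diag_of_def)
  have "(adj W * gibbs d E \<beta> * W) $$ (k,k) = (\<Sum>a<d. \<Sum>b<d. if b = a then cnj (W $$ (a,k)) * g a * W $$ (a,k) else 0)"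
    unfolding index_adj_mult_mult[OF Wc G k k]
    by (intro sum.cong refl) (auto simp: gibbs_eq_diag_of diag_of_def g_def)
  also have "\<dots> = (\<Sum>a<d. cnj (W $$ (a,k)) * g a * W $$ (a,k))" by simp
  also have "\<dots> = (\<Sum>a<d. g k * (cnj (W $$ (a,k)) * W $$ (a,k)))"
    using W0 k by (intro sum.cong refl) (auto simp: g_def gibbs_weight_def)
  also have "\<dots> = g k * (adj W * W) $$ (k,k)"
    using Wc k by (simp add: index_mult_mat scalar_prod_def lessThan_atLeast0 sum_distrib_left)
  finally show ?thesis using WW k unfolding g_def by simp
qed

(* The probability that \<Lambda>, read in the basis W, sends the j-th column of Q to the k-th
   basis vector. *)
definition transition_weight ::
  "(complex mat \<Rightarrow> complex mat) \<Rightarrow> complex mat \<Rightarrow> complex mat \<Rightarrow> nat \<Rightarrow> nat \<Rightarrow> nat \<Rightarrow> real" where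
  "transition_weight \<Lambda> W Q d k j = Re ((adj W * \<Lambda> (rank_one d (col Q j)) * W) $$ (k,k))"

lemma transition_weight_nonneg:
  assumes "quantum_channel d \<Lambda>" "unitary_mat d W" "k < d"
  shows "0 \<le> transition_weight \<Lambda> W Q d k j"
proof -
  have W: "W \<in> carrier_mat d d" using assms(2) by (rule unitary_mat_carrier)
  have P: "psd d (\<Lambda> (rank_one d (col Q j)))" by (rule quantum_channel_psd[OF assms(1) psd_rank_one])
  then have M: "\<Lambda> (rank_one d (col Q j)) \<in> carrier_mat d d" unfolding psd_def by simp
  have "col W k \<in> carrier_vec d" using W by auto
  then show ?thesis
    unfolding transition_weight_def index_adj_mult_mult_diag[OF W M assms(3)]
    using psd_quad_form[OF P] by simp
qed

lemma sum_transition_weight_col: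
  assumes L: "quantum_channel d \<Lambda>" and W: "unitary_mat d W" and Q: "unitary_mat d Q" and j: "j < d"
  shows "(\<Sum>k<d. transition_weight \<Lambda> W Q d k j) = 1"
proof -
  have Qc: "Q \<in> carrier_mat d d" and QQ: "adj Q * Q = 1\<^sub>m d" using Q unfolding unitary_mat_def by auto
  have P: "\<Lambda> (rank_one d (col Q j)) \<in> carrier_mat d d" using L unfolding quantum_channel_def by simp
  have "(\<Sum>k<d. transition_weight \<Lambda> W Q d k j) = Re (mtrace (adj W * \<Lambda> (rank_one d (col Q j)) * W))"
    unfolding transition_weight_def mtrace_def using unitary_mat_carrier[OF W] by (simp add: Re_sum)
  also have "\<dots> = Re (mtrace (rank_one d (col Q j)))"
    using mtrace_unitary_conj[OF W P] L unfolding quantum_channel_def by simp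
  also have "mtrace (rank_one d (col Q j)) = (adj Q * Q) $$ (j,j)"
    unfolding mtrace_def rank_one_def using Qc j
    by (simp add: index_mult_mat scalar_prod_def lessThan_atLeast0 mult.commute)
  finally show ?thesis using QQ j by simp
qed

lemma transition_weight_expansion:
  assumes L: "quantum_channel d \<Lambda>" and W: "unitary_mat d W" and Q: "Q \<in> carrier_mat d d"
    and k: "k < d"
  shows "Re ((adj W * \<Lambda> (Q * diag_of d (\<lambda>j. complex_of_real (f j)) * adj Q) * W) $$ (k,k))
    = (\<Sum>j<d. f j * transition_weight \<Lambda> W Q d k j)"
proof -
  have P: "\<forall>j<d. rank_one d (col Q j) \<in> carrier_mat d d" by simp
  have LP: "\<forall>j<d. \<Lambda> (rank_one d (col Q j)) \<in> carrier_mat d d"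
    using L unfolding quantum_channel_def by simp
  show ?thesis
    unfolding unitary_diag_eq_mat_sum[OF Q] quantum_channel_mat_sum[OF L P] transition_weight_def
      index_adj_mult_mat_sum[OF unitary_mat_carrier[OF W] LP k]
    by (simp add: Re_sum)
qed

lemma sum_transition_weight_row:
  assumes L: "quantum_channel d \<Lambda>" and W: "unitary_mat d W" and Q: "unitary_mat d Q"
    and k: "k < d"
  shows "(\<Sum>j<d. transition_weight \<Lambda> W Q d k j) = Re ((adj W * \<Lambda> (1\<^sub>m d) * W) $$ (k,k))"
proof -
  have "diag_of d (\<lambda>j. complex_of_real 1) = 1\<^sub>m d" by (rule eq_matI) (auto simp: diag_of_def)
  moreover have "Q \<in> carrier_mat d d" "Q * adj Q = 1\<^sub>m d" using Q unfolding unitary_mat_def by auto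
  ultimately have "Q * diag_of d (\<lambda>j. complex_of_real 1) * adj Q = 1\<^sub>m d" by simp
  then show ?thesis
    using transition_weight_expansion[OF L W unitary_mat_carrier[OF Q] k, of "\<lambda>_. 1"] by simp
qed

lemma sum_rows_stochastic_bounds:
  fixes A :: "nat \<Rightarrow> nat \<Rightarrow> real"
  assumes "\<forall>k<d. \<forall>j<d. 0 \<le> A k j" "\<forall>j<d. (\<Sum>k<d. A k j) = 1" "S \<subseteq> {..<d}" "j < d"
  shows "0 \<le> (\<Sum>k\<in>S. A k j) \<and> (\<Sum>k\<in>S. A k j) \<le> 1"
proof
  show "0 \<le> (\<Sum>k\<in>S. A k j)" using assms by (intro sum_nonneg) auto
  have "(\<Sum>k\<in>S. A k j) \<le> (\<Sum>k<d. A k j)" using assms by (intro sum_mono2) auto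
  then show "(\<Sum>k\<in>S. A k j) \<le> 1" using assms by simp
qed

text \<open>A and B are the transition matrices from the eigenvectors of the state and from the
  energy eigenvectors, l the spectrum and T the Gibbs weights. The rows S of A and of B have
  column sums a and b in [0, 1] of equal total mass; rearrangement against the top window g of
  that length of unit masses bounds l \<bullet> a from above and T \<bullet> b from below, so c = T g
  witnesses the condition.\<close>

lemma transport_condition_of_stochastic:
  fixes l T :: "nat \<Rightarrow> real" and A B :: "nat \<Rightarrow> nat \<Rightarrow> real"
  assumes l: "\<forall>i j. i \<le> j \<and> j < d \<longrightarrow> l i \<le> l j"
    and T: "\<forall>i j. i \<le> j \<and> j < d \<longrightarrow> T j \<le> T i" and T0: "\<forall>i<d. 0 < T i"
    and A0: "\<forall>k<d. \<forall>j<d. 0 \<le> A k j" and A1: "\<forall>j<d. (\<Sum>k<d. A k j) = 1"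
    and B0: "\<forall>k<d. \<forall>i<d. 0 \<le> B k i" and B1: "\<forall>i<d. (\<Sum>k<d. B k i) = 1"
    and AB: "\<forall>k<d. (\<Sum>j<d. A k j) = (\<Sum>i<d. B k i)"
    and P: "\<forall>k<d. P k = (\<Sum>j<d. l j * A k j)"
    and TB: "\<forall>k<d. T k = (\<Sum>i<d. T i * B k i)"
  shows "transport_condition d (\<lambda>i. l i / T i) T {..<d} T P"
proof (rule transport_conditionI)
  fix S assume S: "S \<subseteq> {..<d}"
  define a where "a j = (\<Sum>k\<in>S. A k j)" for j
  define b where "b i = (\<Sum>k\<in>S. B k i)" for i
  define \<mu> where "\<mu> = (\<Sum>j<d. a j)"
  define g where "g = window_mass (\<lambda>_. 1) (real d - \<mu>) (real d)"
  have a: "\<forall>j<d. 0 \<le> a j \<and> a j \<le> 1"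
    unfolding a_def using sum_rows_stochastic_bounds[OF A0 A1 S] by blast
  have b: "\<forall>i<d. 0 \<le> b i \<and> b i \<le> 1"
    unfolding b_def using sum_rows_stochastic_bounds[OF B0 B1 S] by blast
  have "(\<Sum>i<d. b i) = (\<Sum>k\<in>S. \<Sum>i<d. B k i)" unfolding b_def by (rule sum.swap)
  also have "\<dots> = (\<Sum>k\<in>S. \<Sum>j<d. A k j)" by (rule sum.cong[OF refl]) (use AB S in auto)
  also have "\<dots> = \<mu>" unfolding \<mu>_def a_def by (rule sum.swap)
  finally have sum_b: "(\<Sum>i<d. b i) = \<mu>" .
  have \<mu>: "0 \<le> \<mu>" using a unfolding \<mu>_def by (auto intro: sum_nonneg)
  have g: "0 \<le> g i \<and> g i \<le> 1" for i
    using window_mass_nonneg[of "real d - \<mu>" "real d" "\<lambda>_. 1" i]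
      window_mass_le[of "real d - \<mu>" "real d" "\<lambda>_. 1" i] \<mu> unfolding g_def by auto
  have c1: "\<forall>i<d. 0 \<le> T i * g i \<and> T i * g i \<le> T i"
  proof (intro allI impI)
    fix i assume "i < d"
    then have "0 < T i" using T0 by simp
    then show "0 \<le> T i * g i \<and> T i * g i \<le> T i" using g[of i] by (simp add: mult_left_le)
  qed
  have "(\<Sum>i<d. - T i * b i) \<le> (\<Sum>i<d. - T i * g i)"
    using weighted_sum_le_top_unit_window[OF _ b, of "\<lambda>i. - T i"] T
    unfolding g_def sum_b by simp
  moreover have "(\<Sum>i<d. T i * b i) = (\<Sum>k\<in>S. \<Sum>i<d. T i * B k i)"
    unfolding b_def sum_distrib_left by (rule sum.swap)
  moreover have "\<dots> = (\<Sum>k\<in>S. T k)"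
  proof (rule sum.cong[OF refl])
    fix k assume "k \<in> S"
    then show "(\<Sum>i<d. T i * B k i) = T k" using TB[rule_format, of k] S by auto
  qed
  ultimately have c2: "(\<Sum>i<d. T i * g i) \<le> (\<Sum>k\<in>S. T k)" by (simp add: sum_negf)
  have "(\<Sum>k\<in>S. P k) = (\<Sum>k\<in>S. \<Sum>j<d. l j * A k j)"
    by (rule sum.cong[OF refl]) (use P S in auto)
  also have "\<dots> = (\<Sum>j<d. l j * a j)" unfolding a_def sum_distrib_left by (rule sum.swap)
  also have "\<dots> \<le> (\<Sum>j<d. l j * g j)"
    using weighted_sum_le_top_unit_window[OF l a] unfolding g_def \<mu>_def .
  also have "\<dots> = (\<Sum>i<d. l i / T i * (T i * g i))"
    by (rule sum.cong[OF refl]) (use T0 in \<open>simp add: less_imp_neq[symmetric]\<close>)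
  finally have c3: "(\<Sum>k\<in>S. P k) \<le> (\<Sum>i<d. l i / T i * (T i * g i))" .
  show "\<exists>c. (\<forall>i<d. 0 \<le> c i \<and> c i \<le> T i) \<and> (\<Sum>i<d. c i) \<le> (\<Sum>k\<in>S. T k) \<and>
      (\<Sum>k\<in>S. P k) \<le> (\<Sum>i<d. l i / T i * c i)"
    using c1 c2 c3 by (intro exI[of _ "\<lambda>i. T i * g i"]) simp
qed

lemma psd_eigen_decomposition:
  assumes \<rho>: "psd d \<rho>" and lam: "ascending_eigenvalues \<rho> lam"
  obtains V where "unitary_mat d V" "\<rho> = V * maximally_active d lam * adj V"
    "\<forall>j<d. 0 \<le> lam ! j"
proof -
  have \<rho>c: "\<rho> \<in> carrier_mat d d" and \<rho>h: "adj \<rho> = \<rho>" using \<rho> unfolding psd_def by auto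
  have len: "length (map complex_of_real lam) = d"
    and cp: "char_poly \<rho> = (\<Prod>e\<leftarrow>map complex_of_real lam. [:- e, 1:])"
    using lam \<rho>c unfolding ascending_eigenvalues_def by (auto simp: o_def)
  have "diag_of d (\<lambda>i. map complex_of_real lam ! i) = maximally_active d lam"
    using len by (intro eq_matI) (auto simp: maximally_active_def diag_of_def)
  then obtain V where V: "unitary_mat d V" and VD: "adj V * \<rho> * V = maximally_active d lam"
    using hermitian_unitary_diagonalization[OF \<rho>c \<rho>h cp len] by auto
  have "0 \<le> lam ! j" if j: "j < d" for j
  proof -
    have "complex_of_real (lam ! j) = (adj V * \<rho> * V) $$ (j,j)"
      using j unfolding VD by (simp add: maximally_active_def diag_of_def)
    also have "\<dots> = quad_form d \<rho> (col V j)"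
      by (rule index_adj_mult_mult_diag[OF unitary_mat_carrier[OF V] \<rho>c j])
    finally have "Re (complex_of_real (lam ! j)) = Re (quad_form d \<rho> (col V j))"
      by (rule arg_cong)
    moreover have "col V j \<in> carrier_vec d" using unitary_mat_carrier[OF V] by auto
    ultimately show ?thesis using psd_quad_form[OF \<rho>] by fastforce
  qed
  then show ?thesis using that V unitary_conj_eq_imp[OF V \<rho>c VD] by blast
qed

lemma classical_channel_mem_thermal_polytope:
  assumes G0: "\<forall>k<d. \<forall>i<d. 0 \<le> G k i" and G1: "\<forall>i<d. (\<Sum>k<d. G k i) = 1"
    and G_gibbs: "\<forall>k<d. (\<Sum>i<d. G k i * gibbs_weight d E \<beta> i) = gibbs_weight d E \<beta> k"
  shows "vec d (\<lambda>k. \<Sum>i<d. G k i * lam ! i) \<in> thermal_polytope d E \<beta> (maximally_active d lam)"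
proof -
  define R where "R = classical_channel d G (maximally_active d lam)"
  have "classical_channel d G (gibbs d E \<beta>) = gibbs d E \<beta>"
    using G_gibbs by (intro eq_matI) (auto simp: index_classical_channel gibbs_eq_diag_of
        diag_of_def mult.commute simp flip: of_real_mult of_real_sum)
  then have "dephasing_thermalization d E \<beta> (classical_channel d G)"
    unfolding dephasing_thermalization_def
    by (auto simp: quantum_channel_classical_channel[OF G0 G1] index_classical_channel)
  moreover have "energy_basis_change d E (1\<^sub>m d)"
    unfolding energy_basis_change_def by (simp add: unitary_mat_one)
  moreover have "adj (1\<^sub>m d) * R * 1\<^sub>m d = R" unfolding R_def by simp
  moreover have "diagonal_mat R" unfolding R_def diagonal_mat_def by (simp add: index_classical_channel)
  moreover have "vec d (\<lambda>k. \<Sum>i<d. G k i * lam ! i) = vec d (\<lambda>k. Re (R $$ (k,k)))"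
    unfolding R_def by (intro eq_vecI)
      (auto simp: index_classical_channel maximally_active_def diag_of_def Re_sum)
  ultimately show ?thesis
    unfolding thermal_polytope_def mem_Collect_eq R_def
    by (intro exI[of _ "classical_channel d G"] exI[of _ "1\<^sub>m d"]) simp
qed

lemma mult_unitary_conj:
  assumes "U \<in> carrier_mat n n" "V \<in> carrier_mat n n" "D \<in> carrier_mat n n"
  shows "U * (V * D * adj V) * adj U = (U * V) * D * adj (U * V)"
  using assms by (simp add: adj_mult assoc_mult_mat[of _ n n _ n _ n] mult_carrier_mat[of _ n n _ n])

lemma dephasing_thermalization_transport_condition:
  assumes E: "\<forall>i j. i \<le> j \<and> j < d \<longrightarrow> E i \<le> E j" and \<beta>: "0 < \<beta>"
    and \<Lambda>: "dephasing_thermalization d E \<beta> \<Lambda>" and W: "energy_basis_change d E W"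
    and Q: "unitary_mat d Q"
    and lam: "\<forall>i j. i \<le> j \<and> j < d \<longrightarrow> lam ! i \<le> lam ! j" "\<forall>i<d. 0 \<le> lam ! i"
  defines "T \<equiv> gibbs_weight d E \<beta>"
    and "p \<equiv> \<lambda>k. Re ((adj W * \<Lambda> (Q * maximally_active d lam * adj Q) * W) $$ (k,k))"
  shows "transport_condition d (\<lambda>i. lam ! i / T i) T {..<d} T p"
    and "(\<Sum>i<d. lam ! i / T i * T i) = (\<Sum>k<d. p k)"
proof -
  have L: "quantum_channel d \<Lambda>" and L_gibbs: "\<Lambda> (gibbs d E \<beta>) = gibbs d E \<beta>"
    using \<Lambda> unfolding dephasing_thermalization_def by auto
  have Wu: "unitary_mat d W" using W unfolding energy_basis_change_def by simp
  define A where "A = transition_weight \<Lambda> W Q d"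
  define B where "B = transition_weight \<Lambda> W (1\<^sub>m d) d"
  have T0: "\<forall>i<d. 0 < T i" unfolding T_def by (simp add: gibbs_weight_pos)
  have A0: "\<forall>k<d. \<forall>j<d. 0 \<le> A k j" and B0: "\<forall>k<d. \<forall>i<d. 0 \<le> B k i"
    unfolding A_def B_def using transition_weight_nonneg[OF L Wu] by auto
  have A1: "\<forall>j<d. (\<Sum>k<d. A k j) = 1" and B1: "\<forall>i<d. (\<Sum>k<d. B k i) = 1"
    unfolding A_def B_def using sum_transition_weight_col[OF L Wu] Q unitary_mat_one by auto
  have AB: "\<forall>k<d. (\<Sum>j<d. A k j) = (\<Sum>i<d. B k i)"
    unfolding A_def B_def using sum_transition_weight_row[OF L Wu] Q unitary_mat_one by auto
  have p: "\<forall>k<d. p k = (\<Sum>j<d. lam ! j * A k j)"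
    unfolding p_def A_def maximally_active_def
    using transition_weight_expansion[OF L Wu unitary_mat_carrier[OF Q]] by auto
  have TB: "\<forall>k<d. T k = (\<Sum>i<d. T i * B k i)"
  proof (intro allI impI)
    fix k assume k: "k < d"
    have "gibbs d E \<beta> = 1\<^sub>m d * diag_of d (\<lambda>i. complex_of_real (T i)) * adj (1\<^sub>m d)"
      unfolding gibbs_eq_diag_of T_def by (simp add: diag_of_def)
    then have "Re ((adj W * \<Lambda> (gibbs d E \<beta>) * W) $$ (k,k)) = (\<Sum>i<d. T i * B k i)"
      unfolding B_def using transition_weight_expansion[OF L Wu one_carrier_mat k] by simp
    then show "T k = (\<Sum>i<d. T i * B k i)"
      using energy_basis_change_gibbs[OF W k] L_gibbs unfolding T_def by simp
  qed
  have T: "\<forall>i j. i \<le> j \<and> j < d \<longrightarrow> T j \<le> T i"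
    unfolding T_def using gibbs_weight_antimono[OF E \<beta>] by auto
  show "transport_condition d (\<lambda>i. lam ! i / T i) T {..<d} T p"
    by (rule transport_condition_of_stochastic[OF lam(1) T T0 A0 A1 B0 B1 AB p TB])
  have "(\<Sum>i<d. lam ! i / T i * T i) = (\<Sum>j<d. lam ! j * (\<Sum>k<d. A k j))"
    using T0 A1 by (intro sum.cong) auto
  also have "\<dots> = (\<Sum>j<d. \<Sum>k<d. lam ! j * A k j)" by (simp add: sum_distrib_left)
  also have "\<dots> = (\<Sum>k<d. \<Sum>j<d. lam ! j * A k j)" by (rule sum.swap)
  also have "\<dots> = (\<Sum>k<d. p k)" using p by simp
  finally show "(\<Sum>i<d. lam ! i / T i * T i) = (\<Sum>k<d. p k)" .
qed

lemma dephasing_thermalization_transport_plan: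
  assumes E: "\<forall>i j. i \<le> j \<and> j < d \<longrightarrow> E i \<le> E j" and \<beta>: "0 < \<beta>"
    and \<Lambda>: "dephasing_thermalization d E \<beta> \<Lambda>" and W: "energy_basis_change d E W"
    and Q: "unitary_mat d Q"
    and lam: "\<forall>i j. i \<le> j \<and> j < d \<longrightarrow> lam ! i \<le> lam ! j" "\<forall>i<d. 0 \<le> lam ! i"
  defines "T \<equiv> gibbs_weight d E \<beta>"
    and "p \<equiv> \<lambda>k. Re ((adj W * \<Lambda> (Q * maximally_active d lam * adj Q) * W) $$ (k,k))"
  shows "\<exists>X. transport_plan d (\<lambda>i. lam ! i / T i) T {..<d} T p X"
proof (rule transport_plan_exists)
  have T0: "\<forall>i<d. 0 < T i" unfolding T_def by (simp add: gibbs_weight_pos)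
  then show "\<forall>k\<in>{..<d}. 0 < T k" "\<forall>i<d. 0 \<le> T i" by (auto simp: less_imp_le)
  show "\<forall>i<d. 0 \<le> lam ! i / T i" using lam(2) T0 by (simp add: less_imp_le)
  show "\<forall>i j. i \<le> j \<and> j < d \<longrightarrow> lam ! i / T i \<le> lam ! j / T j"
    using lam T0 gibbs_weight_antimono[OF E \<beta>] unfolding T_def by (auto intro: frac_le)
  show "transport_condition d (\<lambda>i. lam ! i / T i) T {..<d} T p"
    and "(\<Sum>i<d. lam ! i / T i * T i) = (\<Sum>k\<in>{..<d}. p k)"
    using dephasing_thermalization_transport_condition[OF E \<beta> \<Lambda> W Q lam]
    unfolding T_def p_def by simp_all
qed simp_all

lemma thermal_polytope_mem_of_transport_plan:
  assumes "transport_plan d (\<lambda>i. lam ! i / gibbs_weight d E \<beta> i) (gibbs_weight d E \<beta>) {..<d}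
      (gibbs_weight d E \<beta>) p X"
  shows "vec d p \<in> thermal_polytope d E \<beta> (maximally_active d lam)"
proof -
  define T where "T = gibbs_weight d E \<beta>"
  define G where "G k i = X k i / T i" for k i
  have T: "\<forall>i<d. 0 < T i" unfolding T_def by (simp add: gibbs_weight_pos)
  have X: "\<forall>k<d. \<forall>i<d. 0 \<le> X k i" "\<forall>i<d. (\<Sum>k<d. X k i) = T i" "\<forall>k<d. (\<Sum>i<d. X k i) = T k"
    "\<forall>k<d. (\<Sum>i<d. lam ! i / T i * X k i) = p k"
    using assms unfolding transport_plan_def T_def by auto
  have "\<forall>k<d. \<forall>i<d. 0 \<le> G k i" using T X(1) unfolding G_def by (simp add: less_imp_le)
  moreover have "\<forall>i<d. (\<Sum>k<d. G k i) = 1"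
    using T X(2) unfolding G_def by (simp add: less_imp_neq[symmetric] flip: sum_divide_distrib)
  moreover have "(\<Sum>i<d. G k i * T i) = (\<Sum>i<d. X k i)" for k
    unfolding G_def by (rule sum.cong[OF refl]) (use T in \<open>simp add: less_imp_neq[symmetric]\<close>)
  ultimately have "vec d (\<lambda>k. \<Sum>i<d. G k i * lam ! i) \<in> thermal_polytope d E \<beta> (maximally_active d lam)"
    using X(3) unfolding T_def by (intro classical_channel_mem_thermal_polytope) auto
  moreover have "vec d (\<lambda>k. \<Sum>i<d. G k i * lam ! i) = vec d p"
    using X(4) by (intro eq_vecI) (auto simp: G_def mult.commute)
  ultimately show ?thesis by simp
qed

theorem lemma1:
  fixes d :: nat and E :: "nat \<Rightarrow> real" and \<beta> :: real
    and \<rho> U :: "complex mat" and lam :: "real list"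
  assumes "\<forall>i j. i \<le> j \<and> j < d \<longrightarrow> E i \<le> E j"
    and "\<beta> > 0"
    and "is_state d \<rho>"
    and "ascending_eigenvalues \<rho> lam"
    and "unitary_mat d U"
  shows "thermal_polytope d E \<beta> (U * \<rho> * adj U)
           \<subseteq> thermal_polytope d E \<beta> (maximally_active d lam)"
proof
  fix p assume "p \<in> thermal_polytope d E \<beta> (U * \<rho> * adj U)"
  then obtain \<Lambda> W where \<Lambda>: "dephasing_thermalization d E \<beta> \<Lambda>" and W: "energy_basis_change d E W"
    and p: "p = vec d (\<lambda>k. Re ((adj W * \<Lambda> (U * \<rho> * adj U) * W) $$ (k,k)))"
    unfolding thermal_polytope_def by blast
  obtain V where V: "unitary_mat d V" and \<rho>: "\<rho> = V * maximally_active d lam * adj V"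
    and lam0: "\<forall>j<d. 0 \<le> lam ! j"
    using psd_eigen_decomposition assms(3,4) unfolding is_state_def by blast
  have lam: "\<forall>i j. i \<le> j \<and> j < d \<longrightarrow> lam ! i \<le> lam ! j"
    using assms(3,4) unfolding ascending_eigenvalues_def is_state_def psd_def
    by (auto intro: sorted_nth_mono)
  have "U * \<rho> * adj U = (U * V) * maximally_active d lam * adj (U * V)"
    unfolding \<rho> using unitary_mat_carrier[OF assms(5)] unitary_mat_carrier[OF V]
    by (intro mult_unitary_conj) (auto simp: maximally_active_def diag_of_def)
  then show "p \<in> thermal_polytope d E \<beta> (maximally_active d lam)"
    using dephasing_thermalization_transport_plan[OF assms(1,2) \<Lambda> W
        unitary_mat_mult[OF assms(5) V] lam lam0]
      thermal_polytope_mem_of_transport_plan unfolding p by metis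
qed

end
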